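(* Write $\chi_n^*(M_{1,2}(F))=\sum m_{\langle\lambda\rangle}\chi_{\langle\lambda\rangle}$, the sum over multipartitions $\langle\lambda\rangle=(\lambda(1),\lambda(2),\lambda(3),\lambda(4))\vdash n$ with $h(\lambda(1))\le2$, $h(\lambda(2))\le3$, $h(\lambda(3))\le2$, $h(\lambda(4))\le2$. Let $\langle\lambda\rangle=(\lambda(1),\lambda(2),\lambda(3),\emptyset)$ with $\lambda(1)=(\alpha_1+\alpha_2,\alpha_2)$, $\lambda(2)=(\gamma_1+\gamma_2+\gamma_3,\gamma_2+\gamma_3,\gamma_3)\neq\emptyset$, $\lambda(3)=(w_1+w_2,w_2)\neq\emptyset$ (all $\alpha_i,\gamma_i,w_i\ge0$ integers). If either $w_1\le2$, or $w_1\ge3$ and $\gamma_1+\gamma_2\ge\lceil w_1/2\rceil-1$, then $m_{\langle\lambda\rangle}\neq0$.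
   Context: $F$ is a field of characteristic zero. $M_{1,2}(F)$ is $M_3(F)$ with $\mathbb{Z}_2$-grading with even part spanned by $e_{11},e_{22},e_{23},e_{32},e_{33}$, odd part by $e_{12},e_{13},e_{21},e_{31}$, and orthosymplectic superinvolution $*$ sending the matrix with rows $(a,b,c),(d,e,f),(g,h,i)$ to the matrix with rows $(a,-g,d),(c,i,-f),(-b,-h,e)$. Its even symmetric, even skew, odd symmetric, odd skew parts are $\mathrm{span}\{e_{11},e_{22}+e_{33}\}$, $\mathrm{span}\{e_{22}-e_{33},e_{23},e_{32}\}$, $\mathrm{span}\{e_{12}-e_{31},e_{13}+e_{21}\}$, $\mathrm{span}\{e_{12}+e_{31},e_{13}-e_{21}\}$. In the free $*$-superalgebra on variables $y_i^+,y_i^-,z_i^+,z_i^-$ (even symmetric, even skew, odd symmetric, odd skew), a $*$-identity is a polynomial vanishing under all substitutions of the variables by elements of the corresponding parts; $Id_2^*$ denotes the set of them. $P_n^*$ is the span of the monomials $w_{\sigma(1)}\cdots w_{\sigma(n)}$, $\sigma\in S_n$, $w_i\in\{y_i^+,y_i^-,z_i^+,z_i^-\}$. The group $\mathbb{H}_n=(\mathbb{Z}_2\times\mathbb{Z}_2)\wr S_n$, with $\mathbb{Z}_2\times\mathbb{Z}_2=\{1,*,\zeta,*\zeta\}$, acts on $P_n^*$: $h=(a_1,\dots,a_n;\sigma)$ sends $y_i^+\mapsto y_{\sigma(i)}^+$, $y_i^-\mapsto \pm y_{\sigma(i)}^-$ (sign $+$ iff $a_{\sigma(i)}\in\{1,\zeta\}$),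 $z_i^+\mapsto\pm z_{\sigma(i)}^+$ ($+$ iff $a_{\sigma(i)}\in\{1,*\}$), $z_i^-\mapsto\pm z_{\sigma(i)}^-$ ($+$ iff $a_{\sigma(i)}\in\{1,*\zeta\}$). The character of $P_n^*/(P_n^*\cap Id_2^*(M_{1,2}(F)))$ is the $n$-th $*$-cocharacter $\chi_n^*(M_{1,2}(F))$. Irreducible $\mathbb{H}_n$-characters $\chi_{\langle\lambda\rangle}$ correspond to multipartitions $\langle\lambda\rangle=(\lambda(1),\dots,\lambda(4))$, $\lambda(i)\vdash n_i$, $\sum n_i=n$, with $\lambda(1),\dots,\lambda(4)$ corresponding to the variable types $y^+,y^-,z^+,z^-$; equivalently $m_{\langle\lambda\rangle}$ is the multiplicity of $\chi_{\lambda(1)}\otimes\cdots\otimes\chi_{\lambda(4)}$ in the $S_{n_1}\times\cdots\times S_{n_4}$-character of the multilinear polynomials with $n_1,\dots,n_4$ variables of the four types modulo identities. $h(\mu)$ is the height of a partition $\mu$; $\emptyset$ is the empty partition; $\lceil c\rceil$ is the least integer $\ge c$. *)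

theory Defs
  imports Complex_Main "HOL-Combinatorics.Permutations" "HOL-Library.Function_Algebras"
begin

text \<open>3x3 matrices over F, indices 0,1,2 (entries outside are required to be 0).\<close>
type_synonym 'a mat3 = "nat \<Rightarrow> nat \<Rightarrow> 'a"

definition in3 :: "'a::zero mat3 \<Rightarrow> bool" where
  "in3 A \<longleftrightarrow> (\<forall>i j. (3 \<le> i \<or> 3 \<le> j) \<longrightarrow> A i j = 0)"

definition mmul :: "'a::comm_ring_1 mat3 \<Rightarrow> 'a mat3 \<Rightarrow> 'a mat3" where
  "mmul A B = (\<lambda>i j. \<Sum>k<3. A i k * B k j)"

definition mone :: "'a::comm_ring_1 mat3" where
  "mone = (\<lambda>i j. if i = j \<and> i < 3 then 1 else 0)"

definition mzero :: "'a::comm_ring_1 mat3" where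
  "mzero = (\<lambda>i j. 0)"

definition msmult :: "'a::comm_ring_1 \<Rightarrow> 'a mat3 \<Rightarrow> 'a mat3" where
  "msmult c A = (\<lambda>i j. c * A i j)"

definition madd :: "'a::comm_ring_1 mat3 \<Rightarrow> 'a mat3 \<Rightarrow> 'a mat3" where
  "madd A B = (\<lambda>i j. A i j + B i j)"

definition mneg :: "'a::comm_ring_1 mat3 \<Rightarrow> 'a mat3" where
  "mneg A = (\<lambda>i j. - A i j)"

text \<open>Orthosymplectic superinvolution: rows (a,b,c),(d,e,f),(g,h,i) go to
  rows (a,-g,d),(c,i,-f),(-b,-h,e).\<close>
definition mstar :: "'a::comm_ring_1 mat3 \<Rightarrow> 'a mat3" where
  "mstar A = (\<lambda>i j.
     if (i,j) = (0,0) then A 0 0 else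
     if (i,j) = (0,1) then - A 2 0 else
     if (i,j) = (0,2) then A 1 0 else
     if (i,j) = (1,0) then A 0 2 else
     if (i,j) = (1,1) then A 2 2 else
     if (i,j) = (1,2) then - A 1 2 else
     if (i,j) = (2,0) then - A 0 1 else
     if (i,j) = (2,1) then - A 2 1 else
     if (i,j) = (2,2) then A 1 1 else 0)"

text \<open>Z_2-grading: even part spanned by e11, e22, e23, e32, e33 (0-indexed: (0,0) and the
  block {1,2}x{1,2}); odd part by e12, e13, e21, e31.\<close>
definition meven :: "'a::comm_ring_1 mat3 \<Rightarrow> bool" where
  "meven A \<longleftrightarrow> in3 A \<and> (\<forall>i j. (i = 0) \<noteq> (j = 0) \<longrightarrow> A i j = 0)"

definition modd :: "'a::comm_ring_1 mat3 \<Rightarrow> bool" where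
  "modd A \<longleftrightarrow> in3 A \<and> (\<forall>i j. (i = 0) = (j = 0) \<longrightarrow> A i j = 0)"

text \<open>The four homogeneous parts, indexed 0..3 =
  even symmetric (y+), even skew (y-), odd symmetric (z+), odd skew (z-).\<close>
definition mpart :: "nat \<Rightarrow> 'a::comm_ring_1 mat3 set" where
  "mpart t = (if t = 0 then {A. meven A \<and> mstar A = A}
              else if t = 1 then {A. meven A \<and> mstar A = mneg A}
              else if t = 2 then {A. modd A \<and> mstar A = A}
              else {A. modd A \<and> mstar A = mneg A})"

text \<open>A multipartition is given as a list L = [la1, la2, la3, la4] of partitions
  (each a list of row lengths, weakly decreasing; zero rows allowed and ignored).
  The variables are 0 .. n-1 with n = n1+n2+n3+n4, n_b = |la_b|; the first n1 are of
  type y+, the next n2 of type y-, then n3 of type z+, then n4 of type z-.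
  blockof L x = (block index, local index inside the block).\<close>
fun blockof :: "nat list list \<Rightarrow> nat \<Rightarrow> nat \<times> nat" where
  "blockof [] k = (0, k)"
| "blockof (l # ls) k = (if k < sum_list l then (0, k)
     else (case blockof ls (k - sum_list l) of (b, j) \<Rightarrow> (Suc b, j)))"

definition totaln :: "nat list list \<Rightarrow> nat" where
  "totaln L = sum_list (map sum_list L)"

definition vtype :: "nat list list \<Rightarrow> nat \<Rightarrow> nat" where
  "vtype L x = fst (blockof L x)"

text \<open>Coefficient representation: a multilinear polynomial in x_0..x_{n-1} is
  sum over sigma in S_n of c sigma * x_{sigma 0} ... x_{sigma (n-1)}.\<close>
definition Pml :: "nat \<Rightarrow> ((nat \<Rightarrow> nat) \<Rightarrow> 'a::comm_ring_1) set" where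
  "Pml n = {c. \<forall>\<sigma>. c \<sigma> \<noteq> 0 \<longrightarrow> \<sigma> permutes {..<n}}"

definition monoval :: "nat \<Rightarrow> (nat \<Rightarrow> 'a::comm_ring_1 mat3) \<Rightarrow> (nat \<Rightarrow> nat) \<Rightarrow> 'a mat3" where
  "monoval n s \<sigma> = foldr (\<lambda>k acc. mmul (s (\<sigma> k)) acc) [0..<n] mone"

definition evalp :: "nat \<Rightarrow> ((nat \<Rightarrow> nat) \<Rightarrow> 'a::comm_ring_1) \<Rightarrow> (nat \<Rightarrow> 'a mat3) \<Rightarrow> 'a mat3" where
  "evalp n c s = (\<lambda>i j. \<Sum>\<sigma>\<in>{\<sigma>. \<sigma> permutes {..<n}}. c \<sigma> * monoval n s \<sigma> i j)"

definition adm :: "nat list list \<Rightarrow> (nat \<Rightarrow> 'a::comm_ring_1 mat3) \<Rightarrow> bool" where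
  "adm L s \<longleftrightarrow> (\<forall>x < totaln L. s x \<in> mpart (vtype L x))"

definition is_star_id :: "nat list list \<Rightarrow> ((nat \<Rightarrow> nat) \<Rightarrow> 'a::comm_ring_1) \<Rightarrow> bool" where
  "is_star_id L c \<longleftrightarrow> (\<forall>s. adm L s \<longrightarrow> evalp (totaln L) c s = mzero)"

text \<open>Polynomial function of c on admissible substitutions; its kernel on Pml is exactly
  Pml \<inter> Id, so the image of Pml is (S-equivariantly) P/(P \<inter> Id).\<close>
definition evf :: "nat list list \<Rightarrow> ((nat \<Rightarrow> nat) \<Rightarrow> 'a::comm_ring_1) \<Rightarrow> (nat \<Rightarrow> 'a mat3) \<Rightarrow> 'a mat3" where
  "evf L c = (\<lambda>s. if adm L s then evalp (totaln L) c s else mzero)"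

text \<open>tau . (x_{sigma 0} ... x_{sigma(n-1)}) = x_{tau(sigma 0)} ... x_{tau(sigma(n-1))}.\<close>
definition pact :: "(nat \<Rightarrow> nat) \<Rightarrow> ((nat \<Rightarrow> nat) \<Rightarrow> 'a) \<Rightarrow> ((nat \<Rightarrow> nat) \<Rightarrow> 'a)" where
  "pact \<tau> c = (\<lambda>\<sigma>. c (inv \<tau> \<circ> \<sigma>))"

fun rowcol :: "nat list \<Rightarrow> nat \<Rightarrow> nat \<times> nat" where
  "rowcol [] k = (0, k)"
| "rowcol (l # ls) k = (if k < l then (0, k)
     else (case rowcol ls (k - l) of (r, c) \<Rightarrow> (Suc r, c)))"

text \<open>Cell of variable x in the multitableau T_L: (block, (row, column)); block b is filled
  row by row with its variables in increasing order.\<close>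
definition cell :: "nat list list \<Rightarrow> nat \<Rightarrow> nat \<times> nat \<times> nat" where
  "cell L x = (case blockof L x of (b, j) \<Rightarrow> (b, rowcol (L ! b) j))"

definition rowgrp :: "nat list list \<Rightarrow> (nat \<Rightarrow> nat) set" where
  "rowgrp L = {p. p permutes {..<totaln L} \<and>
     (\<forall>x < totaln L. fst (cell L (p x)) = fst (cell L x)
                    \<and> fst (snd (cell L (p x))) = fst (snd (cell L x)))}"

definition colgrp :: "nat list list \<Rightarrow> (nat \<Rightarrow> nat) set" where
  "colgrp L = {q. q permutes {..<totaln L} \<and>
     (\<forall>x < totaln L. fst (cell L (q x)) = fst (cell L x)
                    \<and> snd (snd (cell L (q x))) = snd (snd (cell L x)))}"

text \<open>Young symmetrizer e_{T_L} = e_{T_1} e_{T_2} e_{T_3} e_{T_4}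
  = sum_{p in R, q in C} sgn(q) p q, acting on polynomials.\<close>
definition ysym :: "nat list list \<Rightarrow> ((nat \<Rightarrow> nat) \<Rightarrow> 'a::comm_ring_1) \<Rightarrow> ((nat \<Rightarrow> nat) \<Rightarrow> 'a)" where
  "ysym L c = (\<lambda>\<sigma>. \<Sum>p\<in>rowgrp L. \<Sum>q\<in>colgrp L. of_int (sign q) * pact (p \<circ> q) c \<sigma>)"

text \<open>Multiplicity m_L of chi_{la1} x ... x chi_{la4} in the
  S_{n1} x ... x S_{n4}-module M = P_{n1,..,n4}/(P_{n1,..,n4} \<inter> Id_2^*(M_{1,2}(F))):
  it equals dim_F (e_T M) for the (primitive, up to scalar) Young symmetrizer e_T.\<close>
definition scl :: "'a::comm_ring_1 \<Rightarrow> ((nat \<Rightarrow> 'a mat3) \<Rightarrow> 'a mat3) \<Rightarrow> ((nat \<Rightarrow> 'a mat3) \<Rightarrow> 'a mat3)" where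
  "scl a F = (\<lambda>s i j. a * F s i j)"

definition mult_star :: "nat list list \<Rightarrow> 'a::field itself \<Rightarrow> nat" where
  "mult_star L _ = vector_space.dim (scl :: 'a \<Rightarrow> _)
      {evf L (ysym L c) | c :: (nat \<Rightarrow> nat) \<Rightarrow> 'a. c \<in> Pml (totaln L)}"

end

theory Submission
  imports Defs
begin

text \<open>
  To show that the multiplicity is nonzero it suffices to exhibit one element of
  \<open>e\<^sub>T P/(P \<inter> Id)\<close> that does not vanish on \<open>M\<^sub>1\<^sub>,\<^sub>2(F)\<close>.  We take the Young symmetrizer
  \<open>e\<^sub>T = \<Sum>\<^sub>p\<^sub>\<in>\<^sub>R \<Sum>\<^sub>q\<^sub>\<in>\<^sub>C sgn(q) p q\<close> of a single monomial and evaluate it at a substitution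
  that puts the same matrix into all cells of a row of a block: for \<open>y\<^sup>+\<close> the rows get
  \<open>e\<^sub>1\<^sub>1\<close> and \<open>e\<^sub>2\<^sub>2 + e\<^sub>3\<^sub>3\<close>, for \<open>y\<^sup>-\<close> they get \<open>e\<^sub>2\<^sub>3 + e\<^sub>3\<^sub>2\<close>, \<open>e\<^sub>2\<^sub>2 - e\<^sub>3\<^sub>3\<close>, \<open>e\<^sub>2\<^sub>3\<close>, and for \<open>z\<^sup>+\<close>
  they get \<open>e\<^sub>1\<^sub>2 - e\<^sub>3\<^sub>1\<close>, \<open>e\<^sub>1\<^sub>3 + e\<^sub>2\<^sub>1\<close>.  The row group then only contributes the factor \<open>|R|\<close>,
  and what remains is the signed sum over the column group of the permuted monomial.

  The monomial is ordered so that this sum can be computed.  The cells of most columns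
  are consecutive, so the column contributes the alternating sum (a commutator or the
  standard polynomial \<open>s\<^sub>3\<close>) of its matrices; these are monomial matrices on the rows
  that matter.  The columns of height two of \<open>\<lambda>(1)\<close> would contribute
  \<open>[e\<^sub>1\<^sub>1, e\<^sub>2\<^sub>2 + e\<^sub>3\<^sub>3] = 0\<close>, so their cells are separated: all the \<open>e\<^sub>2\<^sub>2 + e\<^sub>3\<^sub>3\<close> first and all
  the \<open>e\<^sub>1\<^sub>1\<close> later, which still acts as the identity on rows 2 and 3.  Following one row
  through the product shows that one entry is nonzero: the columns of \<open>\<lambda>(2)\<close> of height
  at most two swap rows 2 and 3, and each pair of single columns of \<open>\<lambda>(3)\<close> beyond the
  first is routed \<open>1 \<rightarrow> 2 \<rightarrow> 3 \<rightarrow> 1\<close> through one such swapping column, which is where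
  the hypothesis \<open>\<gamma>\<^sub>1 + \<gamma>\<^sub>2 \<ge> \<lceil>w\<^sub>1/2\<rceil> - 1\<close> is used.  When \<open>w\<^sub>1 = 0\<close> the first column of
  \<open>\<lambda>(3)\<close> is separated as well, and only one of its two orders survives in row 2.
\<close>

section \<open>The ring of \<open>3 \<times> 3\<close> matrices\<close>

lemma sum_lessThan_3: "(\<Sum>k<3. f k) = f 0 + f 1 + f (2::nat)"
  by (simp add: numeral_3_eq_3 numeral_2_eq_2)

lemma all_less_3: "(\<forall>k<3. P k) \<longleftrightarrow> P 0 \<and> P 1 \<and> P (2::nat)"
  by (auto simp: numeral_3_eq_3 numeral_2_eq_2 less_Suc_eq)

lemma in3_mzero: "in3 mzero"
  by (simp add: in3_def mzero_def)

text \<open>The matrices \<open>A\<close> with \<open>in3 A\<close> form a ring; working in this type, products of words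
  of matrices are \<open>prod_list\<close> and the alternating sums below are ring expressions.\<close>

typedef (overloaded) 'a m3 = "{A :: 'a::comm_ring_1 mat3. in3 A}"
  morphisms entry Abs_m3
  using in3_mzero by blast

setup_lifting type_definition_m3

instantiation m3 :: (comm_ring_1) ring_1
begin

lift_definition zero_m3 :: "'a m3" is mzero by (rule in3_mzero)
lift_definition one_m3 :: "'a m3" is mone by (simp add: in3_def mone_def)
lift_definition plus_m3 :: "'a m3 \<Rightarrow> 'a m3 \<Rightarrow> 'a m3" is madd by (simp add: in3_def madd_def)
lift_definition uminus_m3 :: "'a m3 \<Rightarrow> 'a m3" is mneg by (simp add: in3_def mneg_def)
lift_definition minus_m3 :: "'a m3 \<Rightarrow> 'a m3 \<Rightarrow> 'a m3" is "\<lambda>A B. madd A (mneg B)"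
  by (simp add: in3_def madd_def mneg_def)
lift_definition times_m3 :: "'a m3 \<Rightarrow> 'a m3 \<Rightarrow> 'a m3" is mmul by (simp add: in3_def mmul_def)

instance
proof
  fix A B C :: "'a m3"
  show "A * B * C = A * (B * C)"
    by transfer (simp add: mmul_def sum_lessThan_3 fun_eq_iff algebra_simps)
  show "1 * A = A"
    by transfer (auto simp: mmul_def mone_def sum_lessThan_3 in3_def fun_eq_iff)
  show "A * 1 = A"
    by transfer (auto simp: mmul_def mone_def sum_lessThan_3 in3_def fun_eq_iff)
  show "(A + B) * C = A * C + B * C"
    by transfer (simp add: mmul_def madd_def sum_lessThan_3 fun_eq_iff algebra_simps)
  show "A * (B + C) = A * B + A * C"
    by transfer (simp add: mmul_def madd_def sum_lessThan_3 fun_eq_iff algebra_simps)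
  show "A + B + C = A + (B + C)"
    by transfer (simp add: madd_def fun_eq_iff algebra_simps)
  show "A + B = B + A"
    by transfer (simp add: madd_def fun_eq_iff algebra_simps)
  show "0 + A = A"
    by transfer (simp add: madd_def mzero_def)
  show "- A + A = 0"
    by transfer (simp add: madd_def mneg_def mzero_def)
  show "A - B = A + - B"
    by transfer simp
  show "(0::'a m3) \<noteq> 1"
    by transfer (simp add: mzero_def mone_def fun_eq_iff exI[of _ 0])
qed

end

lemma entry_mult: "entry (A * B) i j = (\<Sum>k<3. entry A i k * entry B k j)"
  by transfer (simp add: mmul_def)

lemma entry_diff: "entry (A - B) i j = entry A i j - entry B i j"
  by transfer (simp add: madd_def mneg_def)

lemma entry_add: "entry (A + B) i j = entry A i j + entry B i j"
  by transfer (simp add: madd_def)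

lemma entry_times: "entry (A * B) = mmul (entry A) (entry B)"
  by transfer simp

lemma entry_1: "entry 1 = mone"
  by transfer simp

lemma entry_sum: "entry (\<Sum>a\<in>S. f a) i j = (\<Sum>a\<in>S. entry (f a) i j)"
  by (induction S rule: infinite_finite_induct) (simp_all add: zero_m3.rep_eq mzero_def entry_add)

lemma entry_of_int_mult: "entry (of_int k * A) i j = of_int k * entry A i j"
proof (induction k rule: int_induct[where k = 0])
  case base
  then show ?case by (simp add: zero_m3.rep_eq mzero_def)
next
  case (step1 k)
  then show ?case by (simp add: distrib_right entry_add algebra_simps)
next
  case (step2 k)
  then show ?case by (simp add: left_diff_distrib entry_diff algebra_simps)
qed

lemma foldr_mmul_entry:
  "foldr (\<lambda>k acc. mmul (entry (f k)) acc) xs mone = entry (prod_list (map f xs))"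
  by (induction xs) (simp_all add: entry_times entry_1)

lemma monoval_entry:
  "monoval n (entry \<circ> f) \<sigma> = entry (prod_list (map (f \<circ> \<sigma>) [0..<n]))"
  unfolding monoval_def by (simp add: foldr_mmul_entry[symmetric] comp_def)

section \<open>Alternating sums over column groups\<close>

text \<open>\<open>col_alt col s U w\<close> is the word \<open>w\<close> acted on by the column antisymmetrizer
  \<open>\<Sum>\<^sub>q sgn(q) q\<close> of the columns given by \<open>col\<close>, and then evaluated at \<open>s\<close>.\<close>

datatype 'b factor = Var nat | Const 'b

fun factor_val :: "(nat \<Rightarrow> 'b) \<Rightarrow> (nat \<Rightarrow> nat) \<Rightarrow> 'b factor \<Rightarrow> 'b" where
  "factor_val s q (Var x) = s (q x)"
| "factor_val s q (Const a) = a"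

definition word_prod :: "(nat \<Rightarrow> 'b::monoid_mult) \<Rightarrow> (nat \<Rightarrow> nat) \<Rightarrow> 'b factor list \<Rightarrow> 'b" where
  "word_prod s q w = prod_list (map (factor_val s q) w)"

lemma word_prod_Nil [simp]: "word_prod s q [] = 1"
  and word_prod_Cons [simp]: "word_prod s q (f # w) = factor_val s q f * word_prod s q w"
  and word_prod_append [simp]: "word_prod s q (v @ w) = word_prod s q v * word_prod s q w"
  and word_prod_map_Const [simp]: "word_prod s q (map Const as) = prod_list as"
  by (simp_all add: word_prod_def comp_def)

definition col_perms :: "(nat \<Rightarrow> 'k) \<Rightarrow> nat set \<Rightarrow> (nat \<Rightarrow> nat) set" where
  "col_perms col U = {q. q permutes U \<and> (\<forall>x\<in>U. col (q x) = col x)}"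

definition col_alt :: "(nat \<Rightarrow> 'k) \<Rightarrow> (nat \<Rightarrow> 'b::ring_1) \<Rightarrow> nat set \<Rightarrow> 'b factor list \<Rightarrow> 'b" where
  "col_alt col s U w = (\<Sum>q\<in>col_perms col U. of_int (sign q) * word_prod s q w)"

definition alternant :: "(nat \<Rightarrow> 'b::ring_1) \<Rightarrow> nat list \<Rightarrow> 'b" where
  "alternant s xs = (\<Sum>p | p permutes set xs. of_int (sign p) * word_prod s p (map Var xs))"

fun subst_factor :: "(nat \<Rightarrow> 'b) \<Rightarrow> (nat \<Rightarrow> nat) \<Rightarrow> nat set \<Rightarrow> 'b factor \<Rightarrow> 'b factor" where
  "subst_factor s p K (Var x) = (if x \<in> K then Const (s (p x)) else Var x)"
| "subst_factor s p K (Const a) = Const a"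

lemma map_subst_factor_id:
  "(\<And>x. Var x \<in> set w \<Longrightarrow> x \<notin> K) \<Longrightarrow> map (subst_factor s p K) w = w"
proof (induction w)
  case (Cons f w)
  then show ?case by (cases f) auto
qed simp

lemma map_subst_factor_Var:
  "set xs \<subseteq> K \<Longrightarrow> map (subst_factor s p K) (map Var xs) = map (\<lambda>x. Const (s (p x))) xs"
  by (induction xs) auto

lemma word_prod_compose_subst:
  assumes p: "p permutes K" and q: "q permutes V" and KV: "K \<inter> V = {}"
  shows "word_prod s (p \<circ> q) w = word_prod s q (map (subst_factor s p K) w)"
proof -
  have "factor_val s (p \<circ> q) f = factor_val s q (subst_factor s p K f)" for f
  proof (cases f)
    case (Var x)
    have "q x = x" if "x \<in> K" using that KV permutes_not_in[OF q] by blast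
    moreover have "p (q x) = q x" if "x \<notin> K"
      using that KV permutes_not_in[OF p] permutes_not_in[OF q] permutes_in_image[OF q]
      by (cases "x \<in> V") auto
    ultimately show ?thesis using Var by auto
  qed simp
  then show ?thesis unfolding word_prod_def by (induction w) auto
qed

lemma bij_betw_permutes_invariant:
  assumes "r permutes U" "finite U" "K \<subseteq> U" "r ` K \<subseteq> K"
  shows "bij_betw r K K"
proof -
  have "finite K" using assms(2,3) finite_subset by blast
  moreover have "inj_on r K" by (rule permutes_inj_on[OF assms(1)])
  ultimately show ?thesis using endo_inj_surj[of K r] assms(4) by (simp add: bij_betw_def)
qed

lemma compose_in_col_perms:
  assumes K: "K = {x\<in>U. col x = c}" and p: "p permutes K" and "q \<in> col_perms col (U - K)"
  shows "p \<circ> q \<in> col_perms col U"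
proof -
  have q: "q permutes U - K" "\<forall>x\<in>U - K. col (q x) = col x"
    using assms(3) by (auto simp: col_perms_def)
  have "p \<circ> q permutes U"
    using permutes_compose[OF permutes_subset[OF q(1)] permutes_subset[OF p]] K by auto
  moreover have "col ((p \<circ> q) x) = col x" if "x \<in> U" for x
  proof (cases "x \<in> K")
    case True
    then show ?thesis using K permutes_in_image[OF p] permutes_not_in[OF q(1)] by auto
  next
    case False
    then show ?thesis using that q K permutes_in_image[OF q(1)] permutes_not_in[OF p] by auto
  qed
  ultimately show ?thesis by (simp add: col_perms_def)
qed

lemma restrict_id_col_perms:
  assumes U: "finite U" and K: "K = {x\<in>U. col x = c}" and "r \<in> col_perms col U"
  shows "restrict_id r K permutes K" "restrict_id r (U - K) \<in> col_perms col (U - K)"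
    and "restrict_id r K \<circ> restrict_id r (U - K) = r"
proof -
  have r: "r permutes U" "\<forall>x\<in>U. col (r x) = col x" using assms(3) by (auto simp: col_perms_def)
  have "bij_betw r K K"
    using r K permutes_in_image[OF r(1)] by (intro bij_betw_permutes_invariant[OF r(1) U]) auto
  then show "restrict_id r K permutes K" by (rule permutes_restrict_id)
  have UK: "bij_betw r (U - K) (U - K)"
    using r K permutes_in_image[OF r(1)] by (intro bij_betw_permutes_invariant[OF r(1) U]) auto
  then show "restrict_id r (U - K) \<in> col_perms col (U - K)"
    using r by (simp add: col_perms_def permutes_restrict_id)
  show "restrict_id r K \<circ> restrict_id r (U - K) = r"
    using UK r(1) by (auto simp: restrict_id_def fun_eq_iff permutes_not_in bij_betw_def)
qed

lemma bij_betw_col_perms_split: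
  assumes U: "finite U" and K: "K = {x\<in>U. col x = c}"
  shows "bij_betw (\<lambda>(p, q). p \<circ> q) ({p. p permutes K} \<times> col_perms col (U - K)) (col_perms col U)"
proof -
  have "restrict_id (p \<circ> q) K = p \<and> restrict_id (p \<circ> q) (U - K) = q"
    if p: "p permutes K" and "q \<in> col_perms col (U - K)" for p q
  proof
    have q: "q permutes U - K" using that(2) by (simp add: col_perms_def)
    show "restrict_id (p \<circ> q) K = p"
      using p q K by (auto simp: restrict_id_def fun_eq_iff permutes_not_in)
    have "p (q x) = q x" if "x \<in> U - K" for x
      using that permutes_in_image[OF q] permutes_not_in[OF p] by blast
    then show "restrict_id (p \<circ> q) (U - K) = q"
      using permutes_not_in[OF q] by (auto simp: restrict_id_def fun_eq_iff)
  qed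
  then show ?thesis
    using compose_in_col_perms[OF K] restrict_id_col_perms[OF U K]
    by (intro bij_betw_byWitness[where f' = "\<lambda>r. (restrict_id r K, restrict_id r (U - K))"]) auto
qed

lemma col_alt_split_class:
  fixes s :: "nat \<Rightarrow> 'b::ring_1"
  assumes U: "finite U" and K: "K = {x\<in>U. col x = c}"
  shows "col_alt col s U w =
    (\<Sum>p | p permutes K. of_int (sign p) * col_alt col s (U - K) (map (subst_factor s p K) w))"
proof -
  have sign: "sign (p \<circ> q) = sign p * sign q" if "p permutes K" "q \<in> col_perms col (U - K)" for p q
  proof (rule sign_compose)
    show "permutation p"
      using that U K by (intro permutes_imp_permutation[of K]) auto
    show "permutation q"
      using that U by (intro permutes_imp_permutation[of "U - K"]) (auto simp: col_perms_def)
  qed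
  have "col_alt col s U w = (\<Sum>pq\<in>{p. p permutes K} \<times> col_perms col (U - K).
      of_int (sign ((\<lambda>(p, q). p \<circ> q) pq)) * word_prod s ((\<lambda>(p, q). p \<circ> q) pq) w)"
    unfolding col_alt_def by (rule sum.reindex_bij_betw[OF bij_betw_col_perms_split[OF U K], symmetric])
  also have "\<dots> = (\<Sum>p | p permutes K. \<Sum>q\<in>col_perms col (U - K).
      of_int (sign (p \<circ> q)) * word_prod s (p \<circ> q) w)"
    by (simp add: sum.cartesian_product split_def)
  also have "\<dots> = (\<Sum>p | p permutes K. \<Sum>q\<in>col_perms col (U - K).
      of_int (sign p) * (of_int (sign q) * word_prod s q (map (subst_factor s p K) w)))"
    by (intro sum.cong refl) (auto simp: sign word_prod_compose_subst col_perms_def mult.assoc)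
  also have "\<dots> = (\<Sum>p | p permutes K. of_int (sign p) * col_alt col s (U - K) (map (subst_factor s p K) w))"
    by (simp add: col_alt_def sum_distrib_left)
  finally show ?thesis .
qed

lemma col_alt_collapse_run:
  fixes s :: "nat \<Rightarrow> 'b::ring_1"
  assumes U: "finite U" and K: "set xs = {x\<in>U. col x = c}"
    and fresh: "\<forall>x\<in>set xs. Var x \<notin> set pre \<union> set post"
  shows "col_alt col s U (pre @ map Var xs @ post) = col_alt col s (U - set xs) (pre @ Const (alternant s xs) # post)"
proof -
  let ?P = "{p. p permutes set xs}" and ?Q = "col_perms col (U - set xs)"
  have subst: "map (subst_factor s p (set xs)) (pre @ map Var xs @ post) = pre @ map (\<lambda>x. Const (s (p x))) xs @ post" for p
  proof -
    have "map (subst_factor s p (set xs)) pre = pre" "map (subst_factor s p (set xs)) post = post"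
      by (rule map_subst_factor_id, use fresh in blast)+
    then show ?thesis by (simp add: map_subst_factor_Var)
  qed
  have "col_alt col s U (pre @ map Var xs @ post)
      = (\<Sum>p\<in>?P. of_int (sign p) * (\<Sum>q\<in>?Q. of_int (sign q) *
           (word_prod s q pre * word_prod s p (map Var xs) * word_prod s q post)))"
    unfolding col_alt_split_class[OF U K] subst unfolding col_alt_def
    by (simp add: word_prod_def comp_def mult.assoc)
  also have "\<dots> = (\<Sum>p\<in>?P. \<Sum>q\<in>?Q. of_int (sign q) * (word_prod s q pre *
           (of_int (sign p) * word_prod s p (map Var xs)) * word_prod s q post))"
    unfolding sum_distrib_left
  proof (intro sum.cong refl)
    have "of_int k * (a * b * c) = a * (of_int k * b) * c" for k and a b c :: 'b
      by (metis mult.assoc mult_of_int_commute)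
    moreover have "of_int k * (of_int l * a) = of_int l * (of_int k * a)" for k l and a :: 'b
      by (metis mult.assoc mult_of_int_commute)
    ultimately show "of_int (sign p) * (of_int (sign q) * (word_prod s q pre * word_prod s p (map Var xs) * word_prod s q post))
      = of_int (sign q) * (word_prod s q pre * (of_int (sign p) * word_prod s p (map Var xs)) * word_prod s q post)"
      for p q by metis
  qed
  also have "\<dots> = (\<Sum>q\<in>?Q. \<Sum>p\<in>?P. of_int (sign q) * (word_prod s q pre *
           (of_int (sign p) * word_prod s p (map Var xs)) * word_prod s q post))"
    by (rule sum.swap)
  also have "\<dots> = (\<Sum>q\<in>?Q. of_int (sign q) * (word_prod s q pre *
           (\<Sum>p\<in>?P. of_int (sign p) * word_prod s p (map Var xs)) * word_prod s q post))"
    by (simp add: sum_distrib_left sum_distrib_right)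
  also have "\<dots> = col_alt col s (U - set xs) (pre @ Const (alternant s xs) # post)"
    by (simp add: col_alt_def alternant_def mult.assoc)
  finally show ?thesis .
qed

datatype tok = Run "nat list" | Single nat

fun tok_vars :: "tok \<Rightarrow> nat list" where
  "tok_vars (Run xs) = xs"
| "tok_vars (Single x) = [x]"

fun run_vars :: "tok \<Rightarrow> nat list" where
  "run_vars (Run xs) = xs"
| "run_vars (Single x) = []"

fun collapse :: "(nat \<Rightarrow> 'b::ring_1) \<Rightarrow> tok \<Rightarrow> 'b factor" where
  "collapse s (Run xs) = Const (alternant s xs)"
| "collapse s (Single x) = Var x"

lemma col_alt_collapse_runs:
  fixes s :: "nat \<Rightarrow> 'b::ring_1"
  assumes "finite U" "distinct (concat (map tok_vars ts))"
    and "\<forall>x\<in>set (concat (map tok_vars ts)). Var x \<notin> set pre"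
    and "\<forall>xs. Run xs \<in> set ts \<longrightarrow> (\<exists>c. set xs = {x\<in>U. col x = c})"
  shows "col_alt col s U (pre @ map Var (concat (map tok_vars ts)))
       = col_alt col s (U - set (concat (map run_vars ts))) (pre @ map (collapse s) ts)"
  using assms
proof (induction ts arbitrary: pre U)
  case (Cons t ts)
  show ?case
  proof (cases t)
    case (Single x)
    have "col_alt col s U ((pre @ [Var x]) @ map Var (concat (map tok_vars ts)))
        = col_alt col s (U - set (concat (map run_vars ts))) ((pre @ [Var x]) @ map (collapse s) ts)"
      using Cons.prems Single by (intro Cons.IH) auto
    then show ?thesis using Single by simp
  next
    case (Run xs)
    obtain c where c: "set xs = {x\<in>U. col x = c}" using Cons.prems(4) Run by auto
    have disjoint: "set xs \<inter> set (concat (map tok_vars ts)) = {}" using Cons.prems(2) Run by simp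
    have "col_alt col s U (pre @ map Var xs @ map Var (concat (map tok_vars ts)))
        = col_alt col s (U - set xs) (pre @ Const (alternant s xs) # map Var (concat (map tok_vars ts)))"
      by (rule col_alt_collapse_run[OF Cons.prems(1) c]) (use Cons.prems(3) disjoint Run in auto)
    also have "\<dots> = col_alt col s (U - set xs) ((pre @ [Const (alternant s xs)]) @ map Var (concat (map tok_vars ts)))"
      by simp
    also have "\<dots> = col_alt col s (U - set xs - set (concat (map run_vars ts)))
        ((pre @ [Const (alternant s xs)]) @ map (collapse s) ts)"
    proof (rule Cons.IH)
      show "\<forall>ys. Run ys \<in> set ts \<longrightarrow> (\<exists>c. set ys = {x\<in>U - set xs. col x = c})"
      proof (intro allI impI)
        fix ys assume ys: "Run ys \<in> set ts"
        then obtain c' where "set ys = {x\<in>U. col x = c'}" using Cons.prems(4) by auto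
        moreover have "set ys \<subseteq> set (concat (map tok_vars ts))" using ys by force
        ultimately show "\<exists>c. set ys = {x\<in>U - set xs. col x = c}" using disjoint by blast
      qed
    qed (use Cons.prems Run in auto)
    finally show ?thesis using Run by (simp add: Diff_Un Un_commute Diff_eq Int_assoc Int_commute)
  qed
qed simp

lemma tok_vars_diff_run_vars:
  "distinct (concat (map tok_vars ts)) \<Longrightarrow>
   set (concat (map tok_vars ts)) - set (concat (map run_vars ts)) = {x. Single x \<in> set ts}"
proof (induction ts)
  case (Cons t ts)
  have "set (concat (map run_vars ts)) \<subseteq> set (concat (map tok_vars ts))"
  proof (induction ts)
    case (Cons t' ts')
    then show ?case by (cases t') auto
  qed simp
  moreover have "x \<in> set (concat (map tok_vars ts))" if "Single x \<in> set ts" for x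
    using that by force
  ultimately show ?case using Cons by (cases t) auto
qed simp

lemma sum_permutes_pair:
  assumes "x \<noteq> y"
  shows "(\<Sum>p | p permutes {x, y}. f p) = f id + f (transpose x y)"
  using assms by (simp add: sum_over_permutations_insert[of "{y}" x])

lemma col_alt_pair:
  fixes s :: "nat \<Rightarrow> 'b::ring_1"
  assumes U: "finite U" and K: "{x, y} = {z\<in>U. col z = c}" and xy: "x \<noteq> y"
  shows "col_alt col s U w = col_alt col s (U - {x, y}) (map (subst_factor s id {x, y}) w)
                           - col_alt col s (U - {x, y}) (map (subst_factor s (transpose x y) {x, y}) w)"
  using xy by (simp add: col_alt_split_class[OF U K] sum_permutes_pair sign_swap_id)

lemma alternant_1: "alternant s [x] = s x"
  by (simp add: alternant_def)

lemma alternant_2: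
  assumes "x \<noteq> y"
  shows "alternant s [x, y] = s x * s y - s y * s x"
  using assms by (simp add: alternant_def sum_permutes_pair sign_swap_id)

lemma alternant_3:
  assumes "distinct [x, y, z]"
  shows "alternant s [x, y, z] = s x * s y * s z - s x * s z * s y - s y * s x * s z
                               + s y * s z * s x + s z * s x * s y - s z * s y * s x"
proof -
  have yz: "y \<noteq> z" and x: "x \<notin> {y, z}" using assms by auto
  let ?f = "\<lambda>p. of_int (sign p) * word_prod s p (map Var [x, y, z])"
  have "alternant s [x, y, z] = (\<Sum>b\<in>{x, y, z}. ?f (transpose x b \<circ> id) + ?f (transpose x b \<circ> transpose y z))"
    unfolding alternant_def using x
    by (simp add: sum_over_permutations_insert[of "{y, z}" x] sum_permutes_pair[OF yz])
  then show ?thesis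
    using assms by (simp add: sign_swap_id sign_compose permutation_swap_id algebra_simps)
qed

fun wrap :: "'b::ring_1 \<Rightarrow> 'b \<Rightarrow> nat \<Rightarrow> 'b \<Rightarrow> 'b" where
  "wrap X Y 0 S = S"
| "wrap X Y (Suc k) S = X * wrap X Y k (S * Y) - Y * wrap X Y k (S * X)"

lemma map_subst_factor_pair:
  assumes "b \<notin> fst ` set bts \<union> snd ` set bts" "t \<notin> fst ` set bts \<union> snd ` set bts"
  shows "map (subst_factor s p {b, t})
      (map Const P @ map (Var \<circ> fst) ((b, t) # bts) @ map Const M @ map (Var \<circ> snd) ((b, t) # bts) @ map Const Q)
    = map Const (P @ [s (p b)]) @ map (Var \<circ> fst) bts @ map Const (M @ [s (p t)]) @ map (Var \<circ> snd) bts
      @ map Const Q"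
proof -
  have "map (subst_factor s p {b, t}) (map (Var \<circ> f) bts) = map (Var \<circ> f) bts"
    if "f ` set bts \<subseteq> fst ` set bts \<union> snd ` set bts" for f
    by (rule map_subst_factor_id) (use that assms in auto)
  then show ?thesis by (simp add: map_subst_factor_id image_subset_iff)
qed

lemma col_alt_wrap:
  fixes s :: "nat \<Rightarrow> 'b::ring_1"
  assumes "distinct (map fst bts @ map snd bts)"
    and "\<forall>(b, t)\<in>set bts. {x \<in> fst ` set bts \<union> snd ` set bts. col x = col b} = {b, t}"
    and "\<forall>(b, t)\<in>set bts. s b = X \<and> s t = Y"
  shows "col_alt col s (fst ` set bts \<union> snd ` set bts)
           (map Const P @ map (Var \<circ> fst) bts @ map Const M @ map (Var \<circ> snd) bts @ map Const Q)
         = prod_list P * wrap X Y (length bts) (prod_list M) * prod_list Q"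
  using assms
proof (induction bts arbitrary: P M)
  case Nil
  then show ?case by (simp add: col_alt_def col_perms_def mult.assoc)
next
  case (Cons bt bts)
  obtain b t where bt: "bt = (b, t)" by fastforce
  let ?U = "fst ` set bts \<union> snd ` set bts" and ?U' = "fst ` set (bt # bts) \<union> snd ` set (bt # bts)"
  let ?w = "\<lambda>A B. map Const (P @ [A]) @ map (Var \<circ> fst) bts @ map Const (M @ [B]) @ map (Var \<circ> snd) bts @ map Const Q"
  have fresh: "b \<notin> ?U" "t \<notin> ?U" "b \<noteq> t" using Cons.prems(1) bt by auto
  have U: "?U' - {b, t} = ?U" using fresh bt by auto
  have IH: "col_alt col s ?U (?w A B) = prod_list (P @ [A]) * wrap X Y (length bts) (prod_list (M @ [B])) * prod_list Q"
    for A B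
  proof (rule Cons.IH)
    show "\<forall>(b', t')\<in>set bts. {x \<in> ?U. col x = col b'} = {b', t'}"
    proof clarify
      fix b' t' assume bt': "(b', t') \<in> set bts"
      have "{x \<in> ?U'. col x = col b'} = {b', t'}" using bspec[OF Cons.prems(2), of "(b', t')"] bt' by simp
      moreover have "b' \<in> ?U" "t' \<in> ?U"
        using bt' by (metis Un_iff fst_conv image_eqI, metis Un_iff snd_conv image_eqI)
      ultimately show "{x \<in> ?U. col x = col b'} = {b', t'}" unfolding U[symmetric] using fresh by auto
    qed
  qed (use Cons.prems(1,3) in auto)
  let ?v = "map Const P @ map (Var \<circ> fst) (bt # bts) @ map Const M @ map (Var \<circ> snd) (bt # bts) @ map Const Q"
  have "col_alt col s ?U' ?v = col_alt col s (?U' - {b, t}) (map (subst_factor s id {b, t}) ?v)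
      - col_alt col s (?U' - {b, t}) (map (subst_factor s (transpose b t) {b, t}) ?v)"
    by (rule col_alt_pair[where c = "col b", OF _ _ fresh(3)])
      (use bspec[OF Cons.prems(2), of bt] bt in simp_all)
  also have "\<dots> = col_alt col s ?U (?w (s b) (s t)) - col_alt col s ?U (?w (s t) (s b))"
    unfolding U unfolding bt map_subst_factor_pair[OF fresh(1,2)] using fresh(3) by simp
  also have "\<dots> = prod_list P * wrap X Y (length (bt # bts)) (prod_list M) * prod_list Q"
    using bspec[OF Cons.prems(3), of bt] bt
    unfolding IH by (simp add: mult.assoc right_diff_distrib left_diff_distrib)
  finally show ?case .
qed

section \<open>Young symmetrizers of a single monomial\<close>

lemma evalp_ysym_delta:
  fixes s :: "nat \<Rightarrow> 'a::comm_ring_1 mat3"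
  assumes \<sigma>: "\<sigma> permutes {..<totaln L}"
    and row_inv: "\<forall>p\<in>rowgrp L. \<forall>x<totaln L. s (p x) = s x"
  shows "evalp (totaln L) (ysym L (\<lambda>\<tau>. if \<tau> = \<sigma> then 1 else 0)) s i j
       = of_nat (card (rowgrp L)) * (\<Sum>q\<in>colgrp L. of_int (sign q) * monoval (totaln L) s (q \<circ> \<sigma>) i j)"
proof -
  let ?n = "totaln L" and ?R = "rowgrp L" and ?C = "colgrp L"
  let ?P = "{\<tau>. \<tau> permutes {..<?n}}"
  have pq: "p \<circ> q permutes {..<?n}" if "p \<in> ?R" "q \<in> ?C" for p q
    using that by (intro permutes_compose) (auto simp: rowgrp_def colgrp_def)
  have delta: "(\<Sum>\<tau>\<in>?P. (if inv (p \<circ> q) \<circ> \<tau> = \<sigma> then 1 else 0) * monoval ?n s \<tau> i j)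
      = monoval ?n s (p \<circ> q \<circ> \<sigma>) i j" if "p \<in> ?R" "q \<in> ?C" for p q
  proof -
    have inv: "(p \<circ> q) \<circ> inv (p \<circ> q) = id" "inv (p \<circ> q) \<circ> (p \<circ> q) = id"
      using permutes_inv_o[OF pq[OF that]] by auto
    have "inv (p \<circ> q) \<circ> \<tau> = \<sigma> \<longleftrightarrow> \<tau> = p \<circ> q \<circ> \<sigma>" for \<tau>
      by (metis inv comp_assoc comp_id id_comp)
    moreover have "p \<circ> q \<circ> \<sigma> \<in> ?P" using permutes_compose[OF \<sigma> pq[OF that]] by simp
    ultimately show ?thesis by (simp add: if_distrib[of "\<lambda>x. x * _"] sum.delta' finite_permutations cong: if_cong)
  qed
  have row: "monoval ?n s (p \<circ> q \<circ> \<sigma>) = monoval ?n s (q \<circ> \<sigma>)" if "p \<in> ?R" "q \<in> ?C" for p q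
  proof -
    have "q (\<sigma> k) < ?n" if "k < ?n" for k
      using that permutes_in_image[OF \<sigma>] permutes_in_image[of q "{..<?n}"] \<open>q \<in> ?C\<close>
      by (auto simp: colgrp_def)
    then show ?thesis
      unfolding monoval_def using row_inv \<open>p \<in> ?R\<close> by (intro foldr_cong) auto
  qed
  have "evalp ?n (ysym L (\<lambda>\<tau>. if \<tau> = \<sigma> then 1 else 0)) s i j
      = (\<Sum>\<tau>\<in>?P. \<Sum>p\<in>?R. \<Sum>q\<in>?C. of_int (sign q) *
           ((if inv (p \<circ> q) \<circ> \<tau> = \<sigma> then 1 else 0) * monoval ?n s \<tau> i j))"
    unfolding evalp_def ysym_def pact_def by (simp add: sum_distrib_right mult.assoc)
  also have "\<dots> = (\<Sum>p\<in>?R. \<Sum>q\<in>?C. of_int (sign q) *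
           (\<Sum>\<tau>\<in>?P. (if inv (p \<circ> q) \<circ> \<tau> = \<sigma> then 1 else 0) * monoval ?n s \<tau> i j))"
    by (simp add: sum_distrib_left sum.swap[of _ ?P])
  also have "\<dots> = (\<Sum>p\<in>?R. \<Sum>q\<in>?C. of_int (sign q) * monoval ?n s (q \<circ> \<sigma>) i j)"
    by (intro sum.cong refl) (simp add: delta row)
  finally show ?thesis by simp
qed

lemma (in vector_space) dim_neq_0:
  assumes "V \<subseteq> span W" "finite W" "v \<in> V" "v \<noteq> 0"
  shows "dim V \<noteq> 0"
proof -
  obtain B where B: "B \<subseteq> V" "independent B" "V \<subseteq> span B" "card B = dim V"
    by (rule basis_exists)
  have "finite B" using independent_span_bound[OF assms(2) B(2)] B(1) assms(1) by blast
  moreover have "B \<noteq> {}"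
  proof
    assume "B = {}"
    then show False using B(3) assms(3,4) by (auto simp: subset_singleton_iff)
  qed
  ultimately show ?thesis using B(4) card_0_eq by metis
qed

lemma vector_space_scl: "vector_space (scl :: 'a::field \<Rightarrow> ((nat \<Rightarrow> 'a mat3) \<Rightarrow> 'a mat3) \<Rightarrow> _)"
  unfolding vector_space_def module_def scl_def by (auto simp: fun_eq_iff algebra_simps)

lemma Pml_expand:
  assumes "c \<in> Pml n"
  shows "c \<tau> = (\<Sum>\<sigma> | \<sigma> permutes {..<n}. c \<sigma> * (if \<tau> = \<sigma> then 1 else 0))"
proof -
  have "(\<Sum>\<sigma> | \<sigma> permutes {..<n}. c \<sigma> * (if \<tau> = \<sigma> then 1 else 0))
      = (\<Sum>\<sigma> | \<sigma> permutes {..<n}. if \<tau> = \<sigma> then c \<sigma> else 0)"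
    by (rule sum.cong) auto
  also have "\<dots> = c \<tau>"
    using assms by (auto simp: sum.delta finite_permutations Pml_def)
  finally show ?thesis ..
qed

lemma sum_apply: "(\<Sum>a\<in>A. f a) x = (\<Sum>a\<in>A. f a x)"
  by (induction A rule: infinite_finite_induct) simp_all

lemma ysym_sum:
  fixes a :: "'i \<Rightarrow> 'a::comm_ring_1"
  shows "ysym L (\<lambda>\<rho>. \<Sum>\<sigma>\<in>S. a \<sigma> * f \<sigma> \<rho>) \<tau> = (\<Sum>\<sigma>\<in>S. a \<sigma> * ysym L (f \<sigma>) \<tau>)"
proof -
  let ?t = "\<lambda>\<sigma> p q. a \<sigma> * (of_int (sign q) * f \<sigma> (inv (p \<circ> q) \<circ> \<tau>))"
  have "ysym L (\<lambda>\<rho>. \<Sum>\<sigma>\<in>S. a \<sigma> * f \<sigma> \<rho>) \<tau> = (\<Sum>p\<in>rowgrp L. \<Sum>q\<in>colgrp L. \<Sum>\<sigma>\<in>S. ?t \<sigma> p q)"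
    unfolding ysym_def pact_def by (simp add: sum_distrib_left mult.left_commute)
  also have "\<dots> = (\<Sum>p\<in>rowgrp L. \<Sum>\<sigma>\<in>S. \<Sum>q\<in>colgrp L. ?t \<sigma> p q)"
    by (rule sum.cong[OF refl], rule sum.swap)
  also have "\<dots> = (\<Sum>\<sigma>\<in>S. \<Sum>p\<in>rowgrp L. \<Sum>q\<in>colgrp L. ?t \<sigma> p q)"
    by (rule sum.swap)
  also have "\<dots> = (\<Sum>\<sigma>\<in>S. a \<sigma> * ysym L (f \<sigma>) \<tau>)"
    unfolding ysym_def pact_def by (simp add: sum_distrib_left)
  finally show ?thesis .
qed

lemma evalp_sum:
  fixes a :: "'i \<Rightarrow> 'a::comm_ring_1"
  shows "evalp n (\<lambda>\<rho>. \<Sum>\<sigma>\<in>S. a \<sigma> * f \<sigma> \<rho>) s i j = (\<Sum>\<sigma>\<in>S. a \<sigma> * evalp n (f \<sigma>) s i j)"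
proof -
  have "evalp n (\<lambda>\<rho>. \<Sum>\<sigma>\<in>S. a \<sigma> * f \<sigma> \<rho>) s i j
      = (\<Sum>\<tau>\<in>{\<tau>. \<tau> permutes {..<n}}. \<Sum>\<sigma>\<in>S. a \<sigma> * (f \<sigma> \<tau> * monoval n s \<tau> i j))"
    unfolding evalp_def by (simp add: sum_distrib_right mult.assoc)
  also have "\<dots> = (\<Sum>\<sigma>\<in>S. a \<sigma> * evalp n (f \<sigma>) s i j)"
    unfolding evalp_def by (subst sum.swap) (simp add: sum_distrib_left)
  finally show ?thesis .
qed

lemma evf_ysym_expand:
  fixes c :: "(nat \<Rightarrow> nat) \<Rightarrow> 'a::field"
  assumes c: "c \<in> Pml (totaln L)"
  shows "evf L (ysym L c)
       = (\<Sum>\<sigma> | \<sigma> permutes {..<totaln L}. scl (c \<sigma>) (evf L (ysym L (\<lambda>\<tau>. if \<tau> = \<sigma> then 1 else 0))))"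
proof (intro ext)
  fix s i j
  let ?P = "{\<sigma>. \<sigma> permutes {..<totaln L}}"
  have c_eq: "(\<lambda>\<rho>. \<Sum>\<sigma>\<in>?P. c \<sigma> * (if \<rho> = \<sigma> then 1 else 0)) = c"
    by (rule ext) (rule Pml_expand[OF c, symmetric])
  have ysym: "ysym L c \<tau> = (\<Sum>\<sigma>\<in>?P. c \<sigma> * ysym L (\<lambda>\<rho>. if \<rho> = \<sigma> then 1 else 0) \<tau>)" for \<tau>
    using ysym_sum[where a = c and f = "\<lambda>\<sigma> \<rho>. if \<rho> = \<sigma> then 1 else 0" and S = ?P] unfolding c_eq .
  then show "evf L (ysym L c) s i j = (\<Sum>\<sigma>\<in>?P. scl (c \<sigma>) (evf L (ysym L (\<lambda>\<tau>. if \<tau> = \<sigma> then 1 else 0)))) s i j"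
  proof (cases "adm L s")
    case True
    have "ysym L c = (\<lambda>\<tau>. \<Sum>\<sigma>\<in>?P. c \<sigma> * ysym L (\<lambda>\<rho>. if \<rho> = \<sigma> then 1 else 0) \<tau>)"
      using ysym by blast
    then show ?thesis
      using True by (simp add: evf_def evalp_sum sum_apply scl_def)
  qed (simp add: evf_def sum_apply scl_def mzero_def)
qed

lemma mult_star_neq_0:
  fixes c :: "(nat \<Rightarrow> nat) \<Rightarrow> 'a::field" and s :: "nat \<Rightarrow> 'a mat3"
  assumes c: "c \<in> Pml (totaln L)" and s: "adm L s"
    and nonzero: "evalp (totaln L) (ysym L c) s i j \<noteq> 0"
  shows "mult_star L TYPE('a) \<noteq> 0"
proof -
  interpret vector_space "scl :: 'a \<Rightarrow> ((nat \<Rightarrow> 'a mat3) \<Rightarrow> 'a mat3) \<Rightarrow> _"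
    by (rule vector_space_scl)
  let ?V = "{evf L (ysym L c) | c :: (nat \<Rightarrow> nat) \<Rightarrow> 'a. c \<in> Pml (totaln L)}"
  let ?W = "(\<lambda>\<sigma>. evf L (ysym L (\<lambda>\<tau>. if \<tau> = \<sigma> then 1 else (0::'a)))) ` {\<sigma>. \<sigma> permutes {..<totaln L}}"
  have "?V \<subseteq> span ?W"
    by (clarsimp simp: evf_ysym_expand) (intro span_sum span_scale span_base; simp)
  moreover have "evf L (ysym L c) \<noteq> 0"
    using nonzero s by (auto simp: evf_def fun_eq_iff)
  ultimately have "dim ?V \<noteq> 0"
    using c by (intro dim_neq_0[of _ ?W]) (auto intro: finite_imageI finite_permutations)
  then show ?thesis by (simp add: mult_star_def)
qed

lemma permutes_of_list:
  assumes "distinct ws" "set ws = {..<n}"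
  shows "(\<lambda>k. if k < n then ws ! k else k) permutes {..<n}" "map (\<lambda>k. if k < n then ws ! k else k) [0..<n] = ws"
proof -
  have len: "length ws = n" using distinct_card[OF assms(1)] assms(2) by simp
  have "bij_betw ((!) ws) {..<n} {..<n}" using bij_betw_nth[OF assms(1)] len assms(2) by simp
  then show "(\<lambda>k. if k < n then ws ! k else k) permutes {..<n}"
    by (intro bij_imp_permutes) (auto elim: bij_betw_cong[THEN iffD1, rotated])
  show "map (\<lambda>k. if k < n then ws ! k else k) [0..<n] = ws"
    by (rule nth_equalityI) (simp_all add: len)
qed

section \<open>Following one row through a product of matrices\<close>

text \<open>The names follow the paper's \<open>e\<^sub>i\<^sub>j\<close>, while entries are indexed from \<open>0\<close>:
  \<open>E23 = e\<^sub>2\<^sub>3\<close> has its entry at \<open>(1, 2)\<close>, \<open>I23 = e\<^sub>2\<^sub>2 + e\<^sub>3\<^sub>3\<close>, \<open>J23 = e\<^sub>2\<^sub>3 + e\<^sub>3\<^sub>2\<close>,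
  \<open>H23 = e\<^sub>2\<^sub>2 - e\<^sub>3\<^sub>3\<close>, \<open>Z12 = e\<^sub>1\<^sub>2 - e\<^sub>3\<^sub>1\<close> and \<open>Z13 = e\<^sub>1\<^sub>3 + e\<^sub>2\<^sub>1\<close>.\<close>

lift_definition E11 :: "'a::comm_ring_1 m3" is "\<lambda>i j. if i = 0 \<and> j = 0 then 1 else 0"
  by (simp add: in3_def)
lift_definition I23 :: "'a::comm_ring_1 m3" is "\<lambda>i j. if i = j \<and> (i = 1 \<or> i = 2) then 1 else 0"
  by (simp add: in3_def)
lift_definition J23 :: "'a::comm_ring_1 m3" is "\<lambda>i j. if (i, j) = (1, 2) \<or> (i, j) = (2, 1) then 1 else 0"
  by (simp add: in3_def)
lift_definition H23 :: "'a::comm_ring_1 m3" is "\<lambda>i j. if (i, j) = (1, 1) then 1 else if (i, j) = (2, 2) then -1 else 0"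
  by (simp add: in3_def)
lift_definition E23 :: "'a::comm_ring_1 m3" is "\<lambda>i j. if (i, j) = (1, 2) then 1 else 0"
  by (simp add: in3_def)
lift_definition Z12 :: "'a::comm_ring_1 m3" is "\<lambda>i j. if (i, j) = (0, 1) then 1 else if (i, j) = (2, 0) then -1 else 0"
  by (simp add: in3_def)
lift_definition Z13 :: "'a::comm_ring_1 m3" is "\<lambda>i j. if (i, j) = (0, 2) \<or> (i, j) = (1, 0) then 1 else 0"
  by (simp add: in3_def)

lemmas matrix_entries = E11.rep_eq I23.rep_eq J23.rep_eq H23.rep_eq E23.rep_eq Z12.rep_eq Z13.rep_eq

lemma entry_matrices_in_mpart:
  "entry E11 \<in> mpart 0" "entry I23 \<in> mpart 0"
  "entry J23 \<in> mpart 1" "entry H23 \<in> mpart 1" "entry E23 \<in> mpart 1"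
  "entry Z12 \<in> mpart 2" "entry Z13 \<in> mpart 2" "entry (0 :: 'a::comm_ring_1 m3) \<in> mpart t"
  unfolding mpart_def meven_def modd_def in3_def mstar_def mneg_def matrix_entries zero_m3.rep_eq mzero_def
  by (auto simp: fun_eq_iff)

definition row_on :: "'a::comm_ring_1 m3 \<Rightarrow> nat \<Rightarrow> nat \<Rightarrow> bool" where
  "row_on A i j \<longleftrightarrow> j < 3 \<and> entry A i j \<noteq> 0 \<and> (\<forall>k<3. k \<noteq> j \<longrightarrow> entry A i k = 0)"

definition zero_row :: "'a::comm_ring_1 m3 \<Rightarrow> nat \<Rightarrow> bool" where
  "zero_row A i \<longleftrightarrow> (\<forall>k<3. entry A i k = 0)"

lemma entry_mult_row_on:
  assumes "row_on A i j"
  shows "entry (A * B) i l = entry A i j * entry B j l"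
proof -
  have "entry (A * B) i l = (\<Sum>k<3. if k = j then entry A i j * entry B j l else 0)"
    using assms unfolding entry_mult row_on_def by (intro sum.cong) auto
  then show ?thesis using assms by (simp add: row_on_def)
qed

lemma row_on_mult:
  fixes A B :: "'a::idom m3"
  shows "row_on A i j \<Longrightarrow> row_on B j k \<Longrightarrow> row_on (A * B) i k"
  by (simp add: row_on_def entry_mult_row_on)

lemma zero_row_mult: "zero_row A i \<Longrightarrow> zero_row (A * B) i"
  by (simp add: zero_row_def entry_mult)

lemma row_on_diff: "row_on A i j \<Longrightarrow> zero_row B i \<Longrightarrow> row_on (A - B) i j"
  by (simp add: row_on_def zero_row_def entry_diff)

lemma row_on_1: "i < 3 \<Longrightarrow> row_on 1 i i"
  by (simp add: row_on_def entry_1 mone_def)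

lemma row_on_prod_list:
  fixes As :: "'a::idom m3 list"
  shows "\<forall>A\<in>set As. row_on A u u \<Longrightarrow> u < 3 \<Longrightarrow> row_on (prod_list As) u u"
  by (induction As) (auto intro: row_on_1 row_on_mult)

lemma row_on_prod_list_concat:
  fixes Xs :: "'a::idom m3 list list"
  shows "\<forall>X\<in>set Xs. row_on (prod_list X) u u \<Longrightarrow> u < 3 \<Longrightarrow> row_on (prod_list (concat Xs)) u u"
  by (induction Xs) (auto intro: row_on_1 row_on_mult)

lemma row_on_prod_list_swap:
  fixes As :: "'a::idom m3 list"
  assumes "\<forall>A\<in>set As. row_on A 1 2 \<and> row_on A 2 1" and "u = 1 \<or> u = 2"
  shows "row_on (prod_list As) u (if even (length As) then u else 3 - u)"
  using assms
proof (induction As arbitrary: u)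
  case Nil
  then show ?case by (auto intro: row_on_1)
next
  case (Cons A As)
  have A: "row_on A u (3 - u)" using Cons.prems by auto
  have "row_on (prod_list As) (3 - u) (if even (length As) then 3 - u else u)"
    using Cons.IH[of "3 - u"] Cons.prems by auto
  from row_on_mult[OF A this] show ?case by (cases "even (length As)") simp_all
qed

lemma I23_mult_wrap:
  "I23 * wrap I23 E11 k S = I23 * S * (if k = 0 then 1 else E11)"
proof -
  have I23_I23: "I23 * I23 = I23" and I23_E11: "I23 * E11 = 0" and E11_E11: "E11 * E11 = E11"
    by (transfer; simp add: mmul_def mzero_def sum_lessThan_3 fun_eq_iff)+
  show ?thesis
  proof (induction k arbitrary: S)
    case (Suc k)
    show ?case
      by (simp add: right_diff_distrib mult.assoc[symmetric] I23_I23 I23_E11 Suc.IH)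
        (simp add: mult.assoc E11_E11)
  qed simp
qed

lemma entry_I23_mult: "u = 1 \<or> u = 2 \<Longrightarrow> entry (I23 * A) u l = entry A u l"
  by (auto simp: entry_mult sum_lessThan_3 matrix_entries)

lemma row_on_E11: "row_on (E11 :: 'a::comm_ring_1 m3) 0 0"
  by (simp add: row_on_def matrix_entries)

lemma row_on_wrap:
  fixes M Q :: "'a::idom m3"
  assumes u: "u = 1 \<or> u = 2" and M: "row_on M u 0" and Q: "row_on Q 0 t"
  shows "row_on (wrap I23 E11 k M * Q) u t"
proof -
  have "row_on (if k = 0 then 1 else E11 :: 'a m3) 0 0"
    by (simp add: row_on_1 row_on_E11)
  then have "row_on (M * (if k = 0 then 1 else E11) * Q) u t"
    using M Q by (blast intro: row_on_mult)
  then have "row_on (I23 * wrap I23 E11 k M * Q) u t"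
    using u by (simp add: I23_mult_wrap mult.assoc row_on_def entry_I23_mult)
  then show ?thesis using u by (simp add: mult.assoc row_on_def entry_I23_mult)
qed

lemma zero_row_wrap:
  assumes u: "u = 1 \<or> u = 2" and M: "zero_row M u"
  shows "zero_row (wrap I23 E11 k M * Q) u"
proof -
  have "zero_row (I23 * wrap I23 E11 k M * Q) u"
    using M u by (simp add: I23_mult_wrap mult.assoc zero_row_def entry_I23_mult zero_row_mult[unfolded zero_row_def])
  then show ?thesis using u by (simp add: mult.assoc zero_row_def entry_I23_mult)
qed

lemmas matrix_simps = row_on_def zero_row_def all_less_3 entry_diff entry_add entry_mult sum_lessThan_3 matrix_entries

lemma row_on_J23: "row_on (J23 :: 'a::comm_ring_1 m3) 1 2" "row_on (J23 :: 'a m3) 2 1"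
  by (simp_all add: matrix_simps)

lemma row_on_Z12_Z13:
  "row_on (Z12 :: 'a::comm_ring_1 m3) 0 1" "row_on (Z12 :: 'a m3) 2 0" "zero_row (Z12 :: 'a m3) 1"
  "row_on (Z13 :: 'a m3) 1 0"
  by (simp_all add: matrix_simps)

lemma row_on_commutator_J23_H23:
  "row_on (J23 * H23 - H23 * J23 :: 'a::{comm_ring_1, ring_char_0} m3) 1 2"
  "row_on (J23 * H23 - H23 * J23 :: 'a::{comm_ring_1, ring_char_0} m3) 2 1"
  by (simp_all add: matrix_simps)

lemma row_on_standard_J23_H23_E23:
  assumes "u = 1 \<or> u = 2"
  shows "row_on (J23 * H23 * E23 - J23 * E23 * H23 - H23 * J23 * E23
                 + H23 * E23 * J23 + E23 * J23 * H23 - E23 * H23 * J23 :: 'a::{comm_ring_1, ring_char_0} m3) u u"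
  using assms by (auto simp: matrix_simps)

lemma row_on_commutator_Z12_Z13:
  assumes "u < 3"
  shows "row_on (Z12 * Z13 - Z13 * Z12 :: 'a::{comm_ring_1, ring_char_0} m3) u u"
  using assms by (auto simp: matrix_simps less_Suc_eq numeral_3_eq_3)

section \<open>The multitableau and the choice of the monomial\<close>

lemma distinct_set_eq_if_covers:
  assumes "finite V" "V \<subseteq> set xs" "length xs \<le> card V"
  shows "distinct xs \<and> set xs = V"
proof
  have "card V \<le> card (set xs)" using assms(2) by (simp add: card_mono)
  then have card: "card (set xs) = length xs"
    using card_length[of xs] assms(3) by linarith
  then show "distinct xs" by (rule card_distinct)
  show "set xs = V"
    using card assms card_length[of xs] by (metis card_seteq finite_set le_antisym)
qed

text \<open>A piece of the monomial is either a whole column \<open>j\<close> of block \<open>b\<close>, read from the top,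
  or a single cell (block, row, column).\<close>

datatype piece = Column nat nat | Cell nat nat nat

context
  fixes \<alpha>1 \<alpha>2 \<gamma>1 \<gamma>2 \<gamma>3 w1 w2 :: nat
begin

definition shape :: "nat list list" where
  "shape = [[\<alpha>1 + \<alpha>2, \<alpha>2], [\<gamma>1 + \<gamma>2 + \<gamma>3, \<gamma>2 + \<gamma>3, \<gamma>3], [w1 + w2, w2], []]"

definition nvars :: nat where
  "nvars = \<alpha>1 + 2 * \<alpha>2 + (\<gamma>1 + 2 * \<gamma>2 + 3 * \<gamma>3) + (w1 + 2 * w2)"

lemma totaln_shape: "totaln shape = nvars"
  by (simp add: totaln_def shape_def nvars_def)

definition col_height :: "nat \<Rightarrow> nat \<Rightarrow> nat" where
  "col_height b j =
     (if b = 0 then (if j < \<alpha>2 then 2 else if j < \<alpha>1 + \<alpha>2 then 1 else 0)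
      else if b = 1 then (if j < \<gamma>3 then 3 else if j < \<gamma>2 + \<gamma>3 then 2 else if j < \<gamma>1 + \<gamma>2 + \<gamma>3 then 1 else 0)
      else if b = 2 then (if j < w2 then 2 else if j < w1 + w2 then 1 else 0)
      else 0)"

definition is_cell :: "nat \<times> nat \<times> nat \<Rightarrow> bool" where
  "is_cell c \<longleftrightarrow> (case c of (b, r, j) \<Rightarrow> b < 3 \<and> r < col_height b j)"

definition cell_var :: "nat \<times> nat \<times> nat \<Rightarrow> nat" where
  "cell_var c = (case c of (b, r, j) \<Rightarrow>
     (if b = 0 then (if r = 0 then 0 else \<alpha>1 + \<alpha>2)
      else if b = 1 then \<alpha>1 + 2 * \<alpha>2 + (if r = 0 then 0 else if r = 1 then \<gamma>1 + \<gamma>2 + \<gamma>3 else \<gamma>1 + 2 * \<gamma>2 + 2 * \<gamma>3)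
      else \<alpha>1 + 2 * \<alpha>2 + (\<gamma>1 + 2 * \<gamma>2 + 3 * \<gamma>3) + (if r = 0 then 0 else w1 + w2)) + j)"

lemma cell_shape:
  "j < \<alpha>1 + \<alpha>2 \<Longrightarrow> cell shape j = (0, 0, j)"
  "j < \<alpha>2 \<Longrightarrow> cell shape (\<alpha>1 + \<alpha>2 + j) = (0, 1, j)"
  "j < \<gamma>1 + \<gamma>2 + \<gamma>3 \<Longrightarrow> cell shape (\<alpha>1 + 2 * \<alpha>2 + j) = (1, 0, j)"
  "j < \<gamma>2 + \<gamma>3 \<Longrightarrow> cell shape (\<alpha>1 + 2 * \<alpha>2 + (\<gamma>1 + \<gamma>2 + \<gamma>3) + j) = (1, 1, j)"
  "j < \<gamma>3 \<Longrightarrow> cell shape (\<alpha>1 + 2 * \<alpha>2 + (\<gamma>1 + 2 * \<gamma>2 + 2 * \<gamma>3) + j) = (1, 2, j)"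
  "j < w1 + w2 \<Longrightarrow> cell shape (\<alpha>1 + 2 * \<alpha>2 + (\<gamma>1 + 2 * \<gamma>2 + 3 * \<gamma>3) + j) = (2, 0, j)"
  "j < w2 \<Longrightarrow> cell shape (\<alpha>1 + 2 * \<alpha>2 + (\<gamma>1 + 2 * \<gamma>2 + 3 * \<gamma>3) + (w1 + w2) + j) = (2, 1, j)"
  by (simp_all add: cell_def shape_def)

lemma is_cell_iff:
  "is_cell (b, r, j) \<longleftrightarrow>
     b = 0 \<and> r = 0 \<and> j < \<alpha>1 + \<alpha>2 \<or> b = 0 \<and> r = 1 \<and> j < \<alpha>2
   \<or> b = 1 \<and> r = 0 \<and> j < \<gamma>1 + \<gamma>2 + \<gamma>3 \<or> b = 1 \<and> r = 1 \<and> j < \<gamma>2 + \<gamma>3 \<or> b = 1 \<and> r = 2 \<and> j < \<gamma>3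
   \<or> b = 2 \<and> r = 0 \<and> j < w1 + w2 \<or> b = 2 \<and> r = 1 \<and> j < w2"
  by (auto simp: is_cell_def col_height_def)

lemma cell_cell_var: "is_cell c \<Longrightarrow> cell shape (cell_var c) = c"
  by (cases c) (auto simp: is_cell_iff cell_var_def cell_shape)

lemma cell_var_surj:
  assumes "x < nvars"
  shows "\<exists>c. is_cell c \<and> cell_var c = x"
proof -
  let ?o = "\<alpha>1 + 2 * \<alpha>2" and ?o' = "\<alpha>1 + 2 * \<alpha>2 + (\<gamma>1 + 2 * \<gamma>2 + 3 * \<gamma>3)"
  have witness: "is_cell c \<and> cell_var c = x \<Longrightarrow> \<exists>c. is_cell c \<and> cell_var c = x" for c by blast
  consider "x < \<alpha>1 + \<alpha>2" | "\<alpha>1 + \<alpha>2 \<le> x" "x < ?o"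
    | "?o \<le> x" "x < ?o + (\<gamma>1 + \<gamma>2 + \<gamma>3)"
    | "?o + (\<gamma>1 + \<gamma>2 + \<gamma>3) \<le> x" "x < ?o + (\<gamma>1 + 2 * \<gamma>2 + 2 * \<gamma>3)"
    | "?o + (\<gamma>1 + 2 * \<gamma>2 + 2 * \<gamma>3) \<le> x" "x < ?o'"
    | "?o' \<le> x" "x < ?o' + (w1 + w2)" | "?o' + (w1 + w2) \<le> x"
    by linarith
  then show ?thesis
  proof cases
    case 1 show ?thesis by (rule witness[of "(0, 0, x)"]) (use 1 in \<open>simp add: is_cell_iff cell_var_def\<close>)
  next
    case 2 show ?thesis by (rule witness[of "(0, 1, x - (\<alpha>1 + \<alpha>2))"]) (use 2 in \<open>simp add: is_cell_iff cell_var_def\<close>)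
  next
    case 3 show ?thesis by (rule witness[of "(1, 0, x - ?o)"]) (use 3 in \<open>simp add: is_cell_iff cell_var_def\<close>)
  next
    case 4 show ?thesis
      by (rule witness[of "(1, 1, x - ?o - (\<gamma>1 + \<gamma>2 + \<gamma>3))"]) (use 4 in \<open>simp add: is_cell_iff cell_var_def\<close>)
  next
    case 5 show ?thesis
      by (rule witness[of "(1, 2, x - ?o - (\<gamma>1 + 2 * \<gamma>2 + 2 * \<gamma>3))"])
        (use 5 in \<open>simp add: is_cell_iff cell_var_def\<close>)
  next
    case 6 show ?thesis by (rule witness[of "(2, 0, x - ?o')"]) (use 6 in \<open>simp add: is_cell_iff cell_var_def\<close>)
  next
    case 7 show ?thesis
      by (rule witness[of "(2, 1, x - ?o' - (w1 + w2))"])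
        (use 7 assms in \<open>simp add: is_cell_iff cell_var_def nvars_def\<close>)
  qed
qed

lemma cell_var_cell: "x < nvars \<Longrightarrow> is_cell (cell shape x) \<and> cell_var (cell shape x) = x"
  using cell_var_surj cell_cell_var by metis

lemma bij_betw_cell_var: "bij_betw cell_var {c. is_cell c} {..<nvars}"
proof (rule bij_betw_byWitness[where f' = "cell shape"])
  show "cell_var ` {c. is_cell c} \<subseteq> {..<nvars}"
    by (auto simp: is_cell_iff cell_var_def nvars_def)
qed (use cell_cell_var cell_var_cell in auto)

definition col_of :: "nat \<Rightarrow> nat \<times> nat" where
  "col_of x = (fst (cell shape x), snd (snd (cell shape x)))"

lemma colgrp_shape: "colgrp shape = col_perms col_of {..<nvars}"
  by (auto simp: colgrp_def col_perms_def col_of_def totaln_shape)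

definition column_vars :: "nat \<Rightarrow> nat \<Rightarrow> nat list" where
  "column_vars b j = map (\<lambda>r. cell_var (b, r, j)) [0..<col_height b j]"

lemma set_column_vars:
  assumes "b < 3"
  shows "set (column_vars b j) = {x \<in> {..<nvars}. col_of x = (b, j)}"
proof
  show "set (column_vars b j) \<subseteq> {x \<in> {..<nvars}. col_of x = (b, j)}"
    using assms bij_betw_apply[OF bij_betw_cell_var] cell_cell_var
    by (auto simp: column_vars_def col_of_def is_cell_def)
  show "{x \<in> {..<nvars}. col_of x = (b, j)} \<subseteq> set (column_vars b j)"
  proof clarify
    fix x assume "x < nvars" "col_of x = (b, j)"
    moreover obtain b' r j' where "cell shape x = (b', r, j')" by (cases "cell shape x") blast
    ultimately show "x \<in> set (column_vars b j)"
      using cell_var_cell[of x] by (force simp: column_vars_def col_of_def is_cell_def)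
  qed
qed

definition row_matrix :: "nat \<Rightarrow> nat \<Rightarrow> 'a::comm_ring_1 m3" where
  "row_matrix b r =
     (if b = 0 then (if r = 0 then E11 else I23)
      else if b = 1 then (if r = 0 then J23 else if r = 1 then H23 else E23)
      else if b = 2 then (if r = 0 then Z12 else Z13)
      else 0)"

definition fill :: "nat \<Rightarrow> 'a::comm_ring_1 m3" where
  "fill x = (case cell shape x of (b, r, j) \<Rightarrow> row_matrix b r)"

lemma fill_cell_var: "is_cell (b, r, j) \<Longrightarrow> fill (cell_var (b, r, j)) = row_matrix b r"
  by (simp add: fill_def cell_cell_var)

lemma adm_fill: "adm shape (entry \<circ> fill)"
proof -
  have "entry (row_matrix b r) \<in> mpart b" for b r
    by (simp add: row_matrix_def entry_matrices_in_mpart entry_matrices_in_mpart[unfolded One_nat_def])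
  then show ?thesis
    by (auto simp: adm_def vtype_def fill_def cell_def split: prod.split)
qed

lemma fill_row_invariant: "\<forall>p\<in>rowgrp shape. \<forall>x<totaln shape. (entry \<circ> fill) (p x) = (entry \<circ> fill) x"
  by (auto simp: rowgrp_def fill_def split: prod.split)

definition column_alt :: "nat \<Rightarrow> nat \<Rightarrow> 'a::comm_ring_1 m3" where
  "column_alt b j = alternant fill (column_vars b j)"

lemma distinct_column_vars: "b < 3 \<Longrightarrow> distinct (column_vars b j)"
  using bij_betw_imp_inj_on[OF bij_betw_cell_var]
  by (auto simp: column_vars_def distinct_map inj_on_def is_cell_def)

lemma column_alt_eq:
  "\<alpha>2 \<le> j \<Longrightarrow> j < \<alpha>1 + \<alpha>2 \<Longrightarrow> column_alt 0 j = E11"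
  "j < \<gamma>3 \<Longrightarrow> column_alt 1 j = J23 * H23 * E23 - J23 * E23 * H23 - H23 * J23 * E23
                                 + H23 * E23 * J23 + E23 * J23 * H23 - E23 * H23 * J23"
  "\<gamma>3 \<le> j \<Longrightarrow> j < \<gamma>2 + \<gamma>3 \<Longrightarrow> column_alt 1 j = J23 * H23 - H23 * J23"
  "\<gamma>2 + \<gamma>3 \<le> j \<Longrightarrow> j < \<gamma>1 + \<gamma>2 + \<gamma>3 \<Longrightarrow> column_alt 1 j = J23"
  "j < w2 \<Longrightarrow> column_alt 2 j = Z12 * Z13 - Z13 * Z12"
  "w2 \<le> j \<Longrightarrow> j < w1 + w2 \<Longrightarrow> column_alt 2 j = Z12"
  using distinct_column_vars[of 1 j] distinct_column_vars[of 2 j]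
  by (simp_all add: column_alt_def column_vars_def col_height_def numeral_3_eq_3 numeral_2_eq_2
      upt_rec alternant_1 alternant_2 alternant_3 fill_cell_var is_cell_iff row_matrix_def)

lemma mult_star_shape_neq_0:
  assumes ws: "distinct ws" "set ws = {..<nvars}"
    and row: "row_on (col_alt col_of (fill :: nat \<Rightarrow> 'a::field_char_0 m3) {..<nvars} (map Var ws)) u t"
  shows "mult_star shape TYPE('a) \<noteq> 0"
proof -
  define \<sigma> where "\<sigma> = (\<lambda>k. if k < nvars then ws ! k else k)"
  have \<sigma>: "\<sigma> permutes {..<nvars}" "map \<sigma> [0..<nvars] = ws"
    unfolding \<sigma>_def by (fact permutes_of_list[OF ws])+
  let ?\<delta> = "\<lambda>\<tau>. if \<tau> = \<sigma> then 1 else (0::'a)"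
  have mono: "monoval nvars (entry \<circ> fill) (q \<circ> \<sigma>) = entry (word_prod fill q (map Var ws))" for q
    unfolding monoval_entry word_prod_def \<sigma>(2)[symmetric] by (simp add: comp_def)
  have "evalp nvars (ysym shape ?\<delta>) (entry \<circ> fill) u t
      = of_nat (card (rowgrp shape)) * entry (col_alt col_of fill {..<nvars} (map Var ws)) u t"
    using evalp_ysym_delta[of \<sigma> shape "entry \<circ> fill" u t] \<sigma>(1) fill_row_invariant
    by (simp add: totaln_shape mono col_alt_def colgrp_shape entry_sum entry_of_int_mult)
  moreover have "card (rowgrp shape) \<noteq> 0"
  proof -
    have "finite (rowgrp shape)"
      by (rule finite_subset[OF _ finite_permutations[of "{..<totaln shape}"]]) (auto simp: rowgrp_def)
    moreover have "id \<in> rowgrp shape" by (simp add: rowgrp_def permutes_id)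
    ultimately show ?thesis by auto
  qed
  ultimately have "evalp (totaln shape) (ysym shape ?\<delta>) (entry \<circ> fill) u t \<noteq> 0"
    using row by (simp add: row_on_def totaln_shape)
  moreover have "?\<delta> \<in> Pml (totaln shape)" using \<sigma>(1) by (simp add: Pml_def totaln_shape)
  ultimately show ?thesis using adm_fill by (intro mult_star_neq_0) auto
qed

fun piece_cells :: "piece \<Rightarrow> (nat \<times> nat \<times> nat) list" where
  "piece_cells (Column b j) = map (\<lambda>r. (b, r, j)) [0..<col_height b j]"
| "piece_cells (Cell b r j) = [(b, r, j)]"

fun piece_tok :: "piece \<Rightarrow> tok" where
  "piece_tok (Column b j) = Run (column_vars b j)"
| "piece_tok (Cell b r j) = Single (cell_var (b, r, j))"

definition word :: "piece list \<Rightarrow> nat list" where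
  "word ds = concat (map (tok_vars \<circ> piece_tok) ds)"

lemma word_eq: "word ds = map cell_var (concat (map piece_cells ds))"
proof -
  have "tok_vars (piece_tok d) = map cell_var (piece_cells d)" for d
    by (cases d) (simp_all add: column_vars_def)
  then show ?thesis by (induction ds) (simp_all add: word_def)
qed

lemma word_permutes:
  assumes covers: "\<forall>c. is_cell c \<longrightarrow> c \<in> set (concat (map piece_cells ds))"
    and length: "length (concat (map piece_cells ds)) \<le> nvars"
  shows "distinct (word ds) \<and> set (word ds) = {..<nvars}"
proof -
  let ?V = "{c. is_cell c}" and ?cs = "concat (map piece_cells ds)"
  have card: "card ?V = nvars" and fin: "finite ?V"
    using bij_betw_same_card[OF bij_betw_cell_var] bij_betw_finite[OF bij_betw_cell_var] by simp_all
  have "distinct ?cs \<and> set ?cs = ?V"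
    using covers length by (intro distinct_set_eq_if_covers fin) (auto simp: card)
  then show ?thesis
    using bij_betw_imp_inj_on[OF bij_betw_cell_var] bij_betw_imp_surj_on[OF bij_betw_cell_var]
    by (simp add: word_eq distinct_map)
qed

fun column_value :: "piece \<Rightarrow> 'a::comm_ring_1 m3" where
  "column_value (Column b j) = column_alt b j"
| "column_value (Cell b r j) = fill (cell_var (b, r, j))"

lemma column_value_Column [simp]: "column_value \<circ> Column b = column_alt b"
  by (simp add: fun_eq_iff)

lemma collapse_columns:
  "\<forall>d\<in>set ds. \<exists>b j. d = Column b j \<Longrightarrow> map (collapse fill \<circ> piece_tok) ds = map (Const \<circ> column_value) ds"
  by (induction ds) (auto simp: column_alt_def)

lemma col_alt_word:
  assumes ws: "distinct (word ds)" "set (word ds) = {..<nvars}"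
    and cols: "\<forall>b j. Column b j \<in> set ds \<longrightarrow> b < 3"
  shows "col_alt col_of fill {..<nvars} (map Var (word ds))
       = col_alt col_of fill {cell_var (b, r, j) | b r j. Cell b r j \<in> set ds}
           (map (collapse fill \<circ> piece_tok) ds)"
proof -
  let ?ts = "map piece_tok ds"
  have word: "word ds = concat (map tok_vars ?ts)" by (simp add: word_def)
  have runs: "\<forall>xs. Run xs \<in> set ?ts \<longrightarrow> (\<exists>c. set xs = {x\<in>{..<nvars}. col_of x = c})"
  proof clarify
    fix xs assume "Run xs \<in> set ?ts"
    then obtain d where d: "d \<in> set ds" "piece_tok d = Run xs" by auto
    moreover obtain b j where "d = Column b j" using d(2) by (cases d) auto
    ultimately have "Column b j \<in> set ds" "xs = column_vars b j" by auto
    then show "\<exists>c. set xs = {x\<in>{..<nvars}. col_of x = c}" using cols set_column_vars by blast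
  qed
  have "{..<nvars} - set (concat (map run_vars ?ts)) = {x. Single x \<in> set ?ts}"
    using tok_vars_diff_run_vars[of ?ts] ws by (simp add: word)
  also have "\<dots> = {cell_var (b, r, j) | b r j. Cell b r j \<in> set ds}"
  proof (intro set_eqI iffI)
    fix x assume "x \<in> {x. Single x \<in> set ?ts}"
    then obtain d where d: "d \<in> set ds" "piece_tok d = Single x" by auto
    moreover have "\<exists>b r j. d = Cell b r j \<and> x = cell_var (b, r, j)" using d(2) by (cases d) auto
    ultimately show "x \<in> {cell_var (b, r, j) | b r j. Cell b r j \<in> set ds}" by auto
  qed force
  finally show ?thesis
    using col_alt_collapse_runs[of "{..<nvars}" ?ts "[]" col_of fill] ws runs
    by (simp add: word comp_def)
qed

lemma length_cells_Columns:
  "length (concat (map piece_cells (map (Column b) [m..<n]))) = sum (col_height b) {m..<n}"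
  by (simp add: length_concat comp_def sum_set_upt_conv_sum_list_nat[symmetric])

lemma length_cells_Cells: "length (concat (map piece_cells (map (Cell b r) js))) = length js"
  by (induction js) simp_all

lemma sum_col_height:
  "sum (col_height 0) {\<alpha>2..<\<alpha>1 + \<alpha>2} = \<alpha>1"
  "sum (col_height 1) {0..<\<gamma>3} = 3 * \<gamma>3"
  "sum (col_height 1) {\<gamma>3..<\<gamma>1 + \<gamma>2 + \<gamma>3} = \<gamma>1 + 2 * \<gamma>2"
  "sum (col_height 2) {0..<w2} = 2 * w2"
  "sum (col_height 2) {1..<w2} = 2 * (w2 - 1)"
proof -
  note const = sum.cong[OF refl, where h = "\<lambda>_. c" for c]
  show "sum (col_height 0) {\<alpha>2..<\<alpha>1 + \<alpha>2} = \<alpha>1"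
    by (subst const[of _ _ 1]) (auto simp: col_height_def)
  show "sum (col_height 1) {0..<\<gamma>3} = 3 * \<gamma>3"
    by (subst const[of _ _ 3]) (auto simp: col_height_def)
  show "sum (col_height 2) {0..<w2} = 2 * w2" "sum (col_height 2) {1..<w2} = 2 * (w2 - 1)"
    by (subst const[of _ _ 2], auto simp: col_height_def)+
  have "sum (col_height 1) {\<gamma>3..<\<gamma>2 + \<gamma>3} = 2 * \<gamma>2"
    by (subst const[of _ _ 2]) (auto simp: col_height_def)
  moreover have "sum (col_height 1) {\<gamma>2 + \<gamma>3..<\<gamma>1 + \<gamma>2 + \<gamma>3} = \<gamma>1"
    by (subst const[of _ _ 1]) (auto simp: col_height_def)
  ultimately show "sum (col_height 1) {\<gamma>3..<\<gamma>1 + \<gamma>2 + \<gamma>3} = \<gamma>1 + 2 * \<gamma>2"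
    using sum.atLeastLessThan_concat[of \<gamma>3 "\<gamma>2 + \<gamma>3" "\<gamma>1 + \<gamma>2 + \<gamma>3" "col_height 1"] by simp
qed

lemma cell_in_pieces: "d \<in> set ds \<Longrightarrow> c \<in> set (piece_cells d) \<Longrightarrow> c \<in> set (concat (map piece_cells ds))"
  by auto

definition split_pairs :: "(nat \<times> nat) list" where
  "split_pairs = map (\<lambda>j. (cell_var (0, 1, j), cell_var (0, 0, j))) [0..<\<alpha>2]"

lemma split_pairs_vars:
  "fst ` set split_pairs \<union> snd ` set split_pairs = {cell_var (0, r, j) | r j. r < 2 \<and> j < \<alpha>2}"
proof -
  have "fst ` set split_pairs = (\<lambda>j. cell_var (0, 1, j)) ` {0..<\<alpha>2}"
    "snd ` set split_pairs = (\<lambda>j. cell_var (0, 0, j)) ` {0..<\<alpha>2}"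
    by (simp_all add: split_pairs_def image_image)
  then show ?thesis by (auto simp: less_2_cases_iff) blast+
qed

lemma split_pairs:
  "distinct (map fst split_pairs @ map snd split_pairs)"
  "\<forall>(b, t)\<in>set split_pairs. {x \<in> fst ` set split_pairs \<union> snd ` set split_pairs. col_of x = col_of b} = {b, t}"
  "\<forall>(b, t)\<in>set split_pairs. fill b = I23 \<and> fill t = E11"
proof -
  have cell: "is_cell (0, r, j)" if "r < 2" "j < \<alpha>2" for r j
    using that by (auto simp: is_cell_iff)
  have col: "col_of (cell_var (0, r, j)) = (0, j)" if "r < 2" "j < \<alpha>2" for r j
    using cell_cell_var[OF cell[OF that]] by (simp add: col_of_def)
  show "distinct (map fst split_pairs @ map snd split_pairs)"
    by (auto simp: split_pairs_def distinct_map inj_on_def cell_var_def)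
  show "\<forall>(b, t)\<in>set split_pairs. {x \<in> fst ` set split_pairs \<union> snd ` set split_pairs. col_of x = col_of b} = {b, t}"
  proof -
    have "{x \<in> fst ` set split_pairs \<union> snd ` set split_pairs. col_of x = col_of (cell_var (0, 1, j))}
        = {cell_var (0, 1, j), cell_var (0, 0, j)}" if "j < \<alpha>2" for j
      unfolding split_pairs_vars using col that by (auto simp: less_2_cases_iff)
    then show ?thesis by (simp add: split_pairs_def)
  qed
  show "\<forall>(b, t)\<in>set split_pairs. fill b = I23 \<and> fill t = E11"
    using cell by (auto simp: split_pairs_def fill_cell_var row_matrix_def)
qed

lemma column_alt_swaps:
  assumes "\<gamma>3 \<le> j" "j < \<gamma>1 + \<gamma>2 + \<gamma>3"
  shows "row_on (column_alt 1 j :: 'a::{comm_ring_1, ring_char_0} m3) 1 2 \<and> row_on (column_alt 1 j :: 'a m3) 2 1"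
  using assms by (cases "j < \<gamma>2 + \<gamma>3")
    (simp_all add: column_alt_eq row_on_commutator_J23_H23 row_on_J23 del: One_nat_def)

lemma column_alt_fixes:
  "j < \<gamma>3 \<Longrightarrow> u = 1 \<or> u = 2 \<Longrightarrow> row_on (column_alt 1 j :: 'a::{comm_ring_1, ring_char_0} m3) u u"
  "j < w2 \<Longrightarrow> u < 3 \<Longrightarrow> row_on (column_alt 2 j :: 'a m3) u u"
  "\<alpha>2 \<le> j \<Longrightarrow> j < \<alpha>1 + \<alpha>2 \<Longrightarrow> row_on (column_alt 0 j :: 'a m3) 0 0"
  by (simp_all add: column_alt_eq row_on_standard_J23_H23_E23 row_on_commutator_Z12_Z13 row_on_E11
      del: One_nat_def)

subsection \<open>The case \<open>w\<^sub>1 > 0\<close>\<close>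

definition ndetours :: nat where
  "ndetours = (w1 - 1) div 2"

text \<open>With the swapping column \<open>(1, \<gamma>\<^sub>3 + i)\<close> in the middle, a detour maps row \<open>0\<close> to row \<open>0\<close>
  (\<open>0 \<rightarrow> 1 \<rightarrow> 2 \<rightarrow> 0\<close>), whereas a single column \<open>Z12\<close> of \<open>\<lambda>(3)\<close> alone does not.\<close>
definition detour :: "nat \<Rightarrow> piece list" where
  "detour i = [Column 2 (w2 + 2 * i + 1), Column 1 (\<gamma>3 + i), Column 2 (w2 + 2 * i + 2)]"

definition middle_w1_pos :: "piece list" where
  "middle_w1_pos =
     map (Column 1) [\<gamma>3 + ndetours..<\<gamma>1 + \<gamma>2 + \<gamma>3] @ map (Column 1) [0..<\<gamma>3]
     @ map (Column 2) [0..<w2] @ [Column 2 w2]"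

definition tail_w1_pos :: "piece list" where
  "tail_w1_pos =
     map (Column 0) [\<alpha>2..<\<alpha>1 + \<alpha>2] @ concat (map detour [0..<ndetours])
     @ (if odd (w1 - 1) then [Column 2 (w1 + w2 - 1)] else [])"

text \<open>The two cells of each column of height two of \<open>\<lambda>(1)\<close> are separated, since the
  commutator of \<open>I23\<close> and \<open>E11\<close> vanishes.\<close>
definition pieces_w1_pos :: "piece list" where
  "pieces_w1_pos = map (Cell 0 1) [0..<\<alpha>2] @ middle_w1_pos @ map (Cell 0 0) [0..<\<alpha>2] @ tail_w1_pos"

lemma Column_in_detours:
  "\<gamma>3 \<le> j \<Longrightarrow> j < \<gamma>3 + ndetours \<Longrightarrow> Column 1 j \<in> set (concat (map detour [0..<ndetours]))"
  "w2 < j \<Longrightarrow> j \<le> w2 + 2 * ndetours \<Longrightarrow> Column 2 j \<in> set (concat (map detour [0..<ndetours]))"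
proof -
  show "Column 1 j \<in> set (concat (map detour [0..<ndetours]))" if "\<gamma>3 \<le> j" "j < \<gamma>3 + ndetours"
    using that by (auto simp: detour_def intro!: bexI[of _ "j - \<gamma>3"])
  show "Column 2 j \<in> set (concat (map detour [0..<ndetours]))" if "w2 < j" "j \<le> w2 + 2 * ndetours"
  proof -
    have "j = w2 + 2 * ((j - w2 - 1) div 2) + 1 \<or> j = w2 + 2 * ((j - w2 - 1) div 2) + 2"
      using that by presburger
    moreover have "(j - w2 - 1) div 2 < ndetours" using that by linarith
    ultimately show ?thesis by (auto simp: detour_def intro!: bexI[of _ "(j - w2 - 1) div 2"])
  qed
qed

lemma Column_in_pieces_w1_pos:
  assumes "1 \<le> w1" "ndetours \<le> \<gamma>1 + \<gamma>2" "is_cell (b, r, j)" "b \<noteq> 0 \<or> \<alpha>2 \<le> j"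
  shows "Column b j \<in> set pieces_w1_pos"
proof -
  have sub: "set (map (Column 0) [\<alpha>2..<\<alpha>1 + \<alpha>2]) \<subseteq> set pieces_w1_pos"
    "set (map (Column 1) [0..<\<gamma>3]) \<subseteq> set pieces_w1_pos"
    "set (map (Column 1) [\<gamma>3 + ndetours..<\<gamma>1 + \<gamma>2 + \<gamma>3]) \<subseteq> set pieces_w1_pos"
    "set (map (Column 2) [0..<Suc w2]) \<subseteq> set pieces_w1_pos"
    "set (concat (map detour [0..<ndetours])) \<subseteq> set pieces_w1_pos"
    "odd (w1 - 1) \<Longrightarrow> Column 2 (w1 + w2 - 1) \<in> set pieces_w1_pos"
    by (auto simp: pieces_w1_pos_def middle_w1_pos_def tail_w1_pos_def)
  consider "b = 0" "\<alpha>2 \<le> j" "j < \<alpha>1 + \<alpha>2" | "b = 1" "j < \<gamma>1 + \<gamma>2 + \<gamma>3" | "b = 2" "j < w1 + w2"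
    using assms(3,4) by (auto simp: is_cell_iff)
  then show ?thesis
  proof cases
    case 1
    then show ?thesis using sub(1) by auto
  next
    case b: 2
    then consider "j < \<gamma>3" | "\<gamma>3 \<le> j" "j < \<gamma>3 + ndetours" | "\<gamma>3 + ndetours \<le> j" by linarith
    then show ?thesis using b sub(2,3,5) Column_in_detours(1)[of j] by cases auto
  next
    case b: 3
    then consider "j \<le> w2" | "w2 < j" "j \<le> w2 + 2 * ndetours" | "w2 + 2 * ndetours < j" by linarith
    then show ?thesis
    proof cases
      case 1
      then have "Column b j \<in> set (map (Column 2) [0..<Suc w2])" using b by auto
      then show ?thesis using sub(4) by blast
    next
      case 2
      then show ?thesis using b sub(5) Column_in_detours(2)[of j] by auto
    next
      case 3
      then have "odd (w1 - 1) \<and> j = w1 + w2 - 1" using b by (simp add: ndetours_def) presburger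
      then show ?thesis using b sub(6) by simp
    qed
  qed
qed

lemma covers_pieces_w1_pos:
  assumes "1 \<le> w1" "ndetours \<le> \<gamma>1 + \<gamma>2" "is_cell c"
  shows "c \<in> set (concat (map piece_cells pieces_w1_pos))"
proof -
  obtain b r j where c: "c = (b, r, j)" by (cases c) blast
  show ?thesis
  proof (cases "b = 0 \<and> j < \<alpha>2")
    case True
    then have "Cell b r j \<in> set pieces_w1_pos"
      using assms(3) by (auto simp: c is_cell_iff pieces_w1_pos_def)
    then show ?thesis by (rule cell_in_pieces) (simp add: c)
  next
    case False
    then have "Column b j \<in> set pieces_w1_pos"
      using assms c by (intro Column_in_pieces_w1_pos) auto
    moreover have "c \<in> set (piece_cells (Column b j))" using assms(3) by (simp add: c is_cell_def)
    ultimately show ?thesis by (rule cell_in_pieces)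
  qed
qed

lemma length_cells_detours:
  assumes "n \<le> ndetours"
  shows "length (concat (map piece_cells (concat (map detour [0..<n])))) = 2 * n + sum (col_height 1) {\<gamma>3..<\<gamma>3 + n}"
  using assms
proof (induction n)
  case (Suc n)
  have "2 * n + 2 < w1" using Suc.prems by (simp add: ndetours_def)
  then have "col_height 2 (w2 + 2 * n + 1) = 1" "col_height 2 (w2 + 2 * n + 2) = 1"
    by (simp_all add: col_height_def)
  then show ?case using Suc by (simp add: detour_def)
qed simp

lemma length_pieces_w1_pos:
  assumes "1 \<le> w1" "ndetours \<le> \<gamma>1 + \<gamma>2"
  shows "length (concat (map piece_cells pieces_w1_pos)) \<le> nvars"
proof -
  have "1 + 2 * ndetours + (if odd (w1 - 1) then 1 else 0) = w1"
    using assms(1) by (simp add: ndetours_def) presburger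
  moreover have "col_height 2 w2 = 1" "odd (w1 - 1) \<Longrightarrow> col_height 2 (w1 + w2 - 1) = 1"
    using assms(1) by (simp_all add: col_height_def)
  moreover have "sum (col_height 1) {\<gamma>3..<\<gamma>3 + ndetours} + sum (col_height 1) {\<gamma>3 + ndetours..<\<gamma>1 + \<gamma>2 + \<gamma>3}
      = \<gamma>1 + 2 * \<gamma>2"
    using assms(2) sum.atLeastLessThan_concat[of \<gamma>3 "\<gamma>3 + ndetours" "\<gamma>1 + \<gamma>2 + \<gamma>3" "col_height 1"]
      sum_col_height(3) by simp
  ultimately show ?thesis
    unfolding pieces_w1_pos_def middle_w1_pos_def tail_w1_pos_def map_append concat_append length_append length_cells_Columns
      length_cells_Cells length_cells_detours[OF order_refl]
    using sum_col_height assms(1) by (simp add: nvars_def split: if_splits)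
qed

lemma word_pieces_w1_pos:
  assumes "1 \<le> w1" "ndetours \<le> \<gamma>1 + \<gamma>2"
  shows "distinct (word pieces_w1_pos)" "set (word pieces_w1_pos) = {..<nvars}"
  using word_permutes covers_pieces_w1_pos[OF assms] length_pieces_w1_pos[OF assms] by auto

lemma col_alt_pieces_w1_pos:
  assumes w1: "1 \<le> w1" and e: "ndetours \<le> \<gamma>1 + \<gamma>2"
  shows "col_alt col_of (fill :: nat \<Rightarrow> 'a::comm_ring_1 m3) {..<nvars} (map Var (word pieces_w1_pos))
       = wrap I23 E11 \<alpha>2 (prod_list (map column_value middle_w1_pos)) * prod_list (map column_value tail_w1_pos)"
proof -
  let ?ds = pieces_w1_pos and ?V = "fst ` set split_pairs \<union> snd ` set split_pairs"
  note ws = word_pieces_w1_pos[OF w1 e]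
  have cols: "\<forall>b j. Column b j \<in> set ?ds \<longrightarrow> b < 3"
    by (auto simp: pieces_w1_pos_def middle_w1_pos_def tail_w1_pos_def detour_def)
  have singles: "{cell_var (b, r, j) | b r j. Cell b r j \<in> set ?ds} = ?V"
  proof -
    have "Cell b r j \<notin> set middle_w1_pos \<union> set tail_w1_pos" for b r j
      by (auto simp: middle_w1_pos_def tail_w1_pos_def detour_def)
    then have "Cell b r j \<in> set ?ds \<longleftrightarrow> b = 0 \<and> r < 2 \<and> j < \<alpha>2" for b r j
      unfolding pieces_w1_pos_def by (auto simp: less_2_cases_iff)
    then show ?thesis unfolding split_pairs_vars by simp
  qed
  have "map (collapse (fill :: nat \<Rightarrow> 'a m3) \<circ> piece_tok) middle_w1_pos = map (Const \<circ> column_value) middle_w1_pos"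
    "map (collapse (fill :: nat \<Rightarrow> 'a m3) \<circ> piece_tok) tail_w1_pos = map (Const \<circ> column_value) tail_w1_pos"
    by (rule collapse_columns; force simp: middle_w1_pos_def tail_w1_pos_def detour_def)+
  then have collapsed: "map (collapse (fill :: nat \<Rightarrow> 'a m3) \<circ> piece_tok) ?ds = map Const [] @ map (Var \<circ> fst) split_pairs
      @ map Const (map column_value middle_w1_pos) @ map (Var \<circ> snd) split_pairs
      @ map Const (map column_value tail_w1_pos)"
    by (simp add: pieces_w1_pos_def split_pairs_def)
  have "col_alt col_of (fill :: nat \<Rightarrow> 'a m3) {..<nvars} (map Var (word ?ds))
      = col_alt col_of fill ?V (map (collapse fill \<circ> piece_tok) ?ds)"
    using col_alt_word[OF ws cols] by (simp only: singles)
  also have "\<dots> = prod_list [] * wrap I23 E11 (length split_pairs) (prod_list (map column_value middle_w1_pos))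
        * prod_list (map column_value tail_w1_pos)"
    unfolding collapsed by (rule col_alt_wrap[OF split_pairs])
  finally show ?thesis by (simp add: split_pairs_def)
qed

lemma row_on_middle_w1_pos:
  assumes "1 \<le> w1"
  shows "row_on (prod_list (map column_value middle_w1_pos) :: 'a::{idom, ring_char_0} m3)
           (if even (\<gamma>1 + \<gamma>2 - ndetours) then 2 else 1) 0"
proof -
  let ?swaps = "map (column_alt 1) [\<gamma>3 + ndetours..<\<gamma>1 + \<gamma>2 + \<gamma>3] :: 'a m3 list"
  have "\<forall>A\<in>set ?swaps. row_on A 1 2 \<and> row_on A 2 1"
    using column_alt_swaps[where 'a = 'a] by auto
  moreover have "length ?swaps = \<gamma>1 + \<gamma>2 - ndetours" by simp
  ultimately have "row_on (prod_list ?swaps) (if even (\<gamma>1 + \<gamma>2 - ndetours) then 2 else 1) 2"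
    using row_on_prod_list_swap[of ?swaps "if even (\<gamma>1 + \<gamma>2 - ndetours) then 2 else 1"]
    by (cases "even (\<gamma>1 + \<gamma>2 - ndetours)") simp_all
  moreover have "row_on (prod_list (map (column_alt 1) [0..<\<gamma>3] :: 'a m3 list)) 2 2"
    using column_alt_fixes(1)[where 'a = 'a] by (intro row_on_prod_list) auto
  moreover have "row_on (prod_list (map (column_alt 2) [0..<w2] :: 'a m3 list)) 2 2"
    using column_alt_fixes(2)[where 'a = 'a] by (intro row_on_prod_list) auto
  moreover have "row_on (column_alt 2 w2 :: 'a m3) 2 0"
    using assms by (simp add: column_alt_eq row_on_Z12_Z13)
  ultimately show ?thesis by (simp add: middle_w1_pos_def row_on_mult)
qed

lemma row_on_tail_w1_pos:
  assumes w1: "1 \<le> w1" and e: "ndetours \<le> \<gamma>1 + \<gamma>2"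
  shows "row_on (prod_list (map column_value tail_w1_pos) :: 'a::{idom, ring_char_0} m3)
           0 (if odd (w1 - 1) then 1 else 0)"
proof -
  have "row_on (prod_list (map (column_alt 0) [\<alpha>2..<\<alpha>1 + \<alpha>2] :: 'a m3 list)) 0 0"
    using column_alt_fixes(3)[where 'a = 'a] by (intro row_on_prod_list) auto
  moreover have detour: "row_on (prod_list (map column_value (detour i)) :: 'a m3) 0 0" if i: "i < ndetours" for i
  proof -
    have "2 * i + 2 < w1" using i by (simp add: ndetours_def)
    then have "column_alt 2 (w2 + 2 * i + 1) = (Z12 :: 'a m3)" "column_alt 2 (w2 + 2 * i + 2) = (Z12 :: 'a m3)"
      by (simp_all add: column_alt_eq)
    moreover have "row_on (column_alt 1 (\<gamma>3 + i) :: 'a m3) 1 2"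
      using i e column_alt_swaps[of "\<gamma>3 + i", where 'a = 'a] by simp
    ultimately show ?thesis
      using row_on_Z12_Z13(1,2)[where 'a = 'a] by (simp add: detour_def) (blast intro: row_on_mult)
  qed
  moreover have "row_on (prod_list (map column_value (concat (map detour [0..<ndetours]))) :: 'a m3) 0 0"
    unfolding map_concat by (rule row_on_prod_list_concat) (auto intro: detour)
  moreover have "row_on (prod_list (map column_value (if odd (w1 - 1) then [Column 2 (w1 + w2 - 1)] else []))
        :: 'a m3) 0 (if odd (w1 - 1) then 1 else 0)"
    using w1 row_on_Z12_Z13[where 'a = 'a] by (simp add: column_alt_eq row_on_1)
  ultimately show ?thesis by (simp add: tail_w1_pos_def row_on_mult)
qed

subsection \<open>The case \<open>w\<^sub>1 = 0\<close>\<close>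

definition tail_w1_zero :: "piece list" where
  "tail_w1_zero =
     map (Column 2) [1..<w2] @ map (Column 1) [\<gamma>3..<\<gamma>1 + \<gamma>2 + \<gamma>3] @ map (Column 1) [0..<\<gamma>3]"

definition pieces_w1_zero :: "piece list" where
  "pieces_w1_zero =
     map (Cell 0 1) [0..<\<alpha>2] @ [Cell 2 1 0] @ map (Cell 0 0) [0..<\<alpha>2]
     @ map (Column 0) [\<alpha>2..<\<alpha>1 + \<alpha>2] @ [Cell 2 0 0] @ tail_w1_zero"

lemma covers_pieces_w1_zero:
  assumes "w1 = 0" "is_cell c"
  shows "c \<in> set (concat (map piece_cells pieces_w1_zero))"
proof -
  obtain b r j where c: "c = (b, r, j)" by (cases c) blast
  have cell: "b = 0 \<and> r = 0 \<and> j < \<alpha>1 + \<alpha>2 \<or> b = 0 \<and> r = 1 \<and> j < \<alpha>2 \<or> b = 1 \<and> j < \<gamma>1 + \<gamma>2 + \<gamma>3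
      \<or> b = 2 \<and> r < 2 \<and> j < w2"
    using assms(2) unfolding c is_cell_iff by (auto simp: assms(1))
  show ?thesis
  proof (cases "b = 0 \<and> j < \<alpha>2 \<or> b = 2 \<and> j = 0")
    case True
    then have "Cell b r j \<in> set pieces_w1_zero"
      using cell by (auto simp: pieces_w1_zero_def less_2_cases_iff)
    then show ?thesis by (rule cell_in_pieces) (simp add: c)
  next
    case False
    then have "Column b j \<in> set pieces_w1_zero"
      using cell by (auto simp: pieces_w1_zero_def tail_w1_zero_def image_iff)
    moreover have "c \<in> set (piece_cells (Column b j))" using assms(2) by (simp add: c is_cell_def)
    ultimately show ?thesis by (rule cell_in_pieces)
  qed
qed

lemma length_pieces_w1_zero:
  assumes "1 \<le> w2"
  shows "length (concat (map piece_cells pieces_w1_zero)) \<le> nvars"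
  unfolding pieces_w1_zero_def tail_w1_zero_def map_append concat_append length_append length_cells_Columns length_cells_Cells
  using sum_col_height sum.atLeastLessThan_concat[of 0 \<gamma>3 "\<gamma>1 + \<gamma>2 + \<gamma>3" "col_height 1"] assms
  by (simp add: nvars_def)

lemma word_pieces_w1_zero:
  assumes "w1 = 0" "1 \<le> w2"
  shows "distinct (word pieces_w1_zero)" "set (word pieces_w1_zero) = {..<nvars}"
  using word_permutes covers_pieces_w1_zero[OF assms(1)] length_pieces_w1_zero[OF assms(2)] by auto

lemma separated_column_w1_zero:
  assumes "1 \<le> w2"
  shows "cell_var (2, 0, 0) \<notin> fst ` set split_pairs \<union> snd ` set split_pairs"
    and "cell_var (2, 1, 0) \<notin> fst ` set split_pairs \<union> snd ` set split_pairs"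
    and "cell_var (2, 0, 0) \<noteq> cell_var (2, 1, 0)"
    and "{cell_var (2, 0, 0), cell_var (2, 1, 0)}
      = {x \<in> fst ` set split_pairs \<union> snd ` set split_pairs \<union> {cell_var (2, 0, 0), cell_var (2, 1, 0)}.
          col_of x = (2, 0)}"
    and "fill (cell_var (2, 0, 0)) = (Z12 :: 'a::comm_ring_1 m3)" "fill (cell_var (2, 1, 0)) = (Z13 :: 'a m3)"
proof -
  have cells: "is_cell (2, 0, 0)" "is_cell (2, 1, 0)" using assms by (auto simp: is_cell_iff)
  show "cell_var (2, 0, 0) \<notin> fst ` set split_pairs \<union> snd ` set split_pairs"
    "cell_var (2, 1, 0) \<notin> fst ` set split_pairs \<union> snd ` set split_pairs"
    "cell_var (2, 0, 0) \<noteq> cell_var (2, 1, 0)"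
    unfolding split_pairs_vars using assms by (auto simp: cell_var_def)
  have "col_of (cell_var (b, r, j)) = (b, j)" if "is_cell (b, r, j)" for b r j
    using cell_cell_var[OF that] by (simp add: col_of_def)
  moreover have "is_cell (0, r, j)" if "r < 2" "j < \<alpha>2" for r j
    using that by (auto simp: is_cell_iff)
  ultimately show "{cell_var (2, 0, 0), cell_var (2, 1, 0)}
      = {x \<in> fst ` set split_pairs \<union> snd ` set split_pairs \<union> {cell_var (2, 0, 0), cell_var (2, 1, 0)}.
          col_of x = (2, 0)}"
    using cells unfolding split_pairs_vars by auto
  show "fill (cell_var (2, 0, 0)) = (Z12 :: 'a m3)" "fill (cell_var (2, 1, 0)) = (Z13 :: 'a m3)"
    using cells by (simp_all add: fill_cell_var row_matrix_def)
qed

lemma col_alt_pieces_w1_zero: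
  assumes w1: "w1 = 0" and w2: "1 \<le> w2"
  defines "E \<equiv> map (column_alt 0) [\<alpha>2..<\<alpha>1 + \<alpha>2]" and "R \<equiv> map column_value tail_w1_zero"
  shows "col_alt col_of (fill :: nat \<Rightarrow> 'a::comm_ring_1 m3) {..<nvars} (map Var (word pieces_w1_zero))
       = wrap I23 E11 \<alpha>2 Z13 * prod_list (E @ Z12 # R) - wrap I23 E11 \<alpha>2 Z12 * prod_list (E @ Z13 # R)"
proof -
  let ?ds = pieces_w1_zero and ?V = "fst ` set split_pairs \<union> snd ` set split_pairs"
  let ?z0 = "cell_var (2, 0, 0)" and ?z1 = "cell_var (2, 1, 0)"
  let ?w = "\<lambda>A B :: 'a m3. map Const [] @ map (Var \<circ> fst) split_pairs @ map Const [A] @ map (Var \<circ> snd) split_pairs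
              @ map Const (E @ B # R)"
  note z = separated_column_w1_zero[OF w2]
  have cols: "\<forall>b j. Column b j \<in> set ?ds \<longrightarrow> b < 3"
    by (auto simp: pieces_w1_zero_def tail_w1_zero_def)
  have "Cell b r j \<in> set ?ds \<longleftrightarrow> b = 0 \<and> r < 2 \<and> j < \<alpha>2 \<or> b = 2 \<and> r < 2 \<and> j = 0" for b r j
    by (auto simp: pieces_w1_zero_def tail_w1_zero_def less_2_cases_iff)
  then have singles: "{cell_var (b, r, j) | b r j. Cell b r j \<in> set ?ds} = ?V \<union> {?z0, ?z1}"
    unfolding split_pairs_vars by (auto simp: less_2_cases_iff)
  have collapsed: "map (collapse (fill :: nat \<Rightarrow> 'a m3) \<circ> piece_tok) ?ds
      = map (Var \<circ> fst) split_pairs @ [Var ?z1] @ map (Var \<circ> snd) split_pairs @ map Const E @ [Var ?z0] @ map Const R"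
    using collapse_columns[of tail_w1_zero]
    by (simp add: pieces_w1_zero_def tail_w1_zero_def split_pairs_def E_def R_def column_alt_def comp_def)
  have keep: "map (subst_factor fill p {?z0, ?z1}) (map (Var \<circ> fst) split_pairs) = map (Var \<circ> fst) split_pairs"
    "map (subst_factor fill p {?z0, ?z1}) (map (Var \<circ> snd) split_pairs) = map (Var \<circ> snd) split_pairs"
    "map (subst_factor fill p {?z0, ?z1}) (map Const As) = map Const As" for p and As :: "'a m3 list"
    by (rule map_subst_factor_id; use z(1,2) in force)+
  have "col_alt col_of (fill :: nat \<Rightarrow> 'a m3) {..<nvars} (map Var (word ?ds))
      = col_alt col_of fill (?V \<union> {?z0, ?z1}) (map (collapse fill \<circ> piece_tok) ?ds)"
    using col_alt_word[OF word_pieces_w1_zero[OF w1 w2] cols] by (simp only: singles)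
  also have "\<dots> = col_alt col_of fill (?V \<union> {?z0, ?z1} - {?z0, ?z1})
        (map (subst_factor fill id {?z0, ?z1}) (map (collapse fill \<circ> piece_tok) ?ds))
      - col_alt col_of fill (?V \<union> {?z0, ?z1} - {?z0, ?z1})
        (map (subst_factor fill (transpose ?z0 ?z1) {?z0, ?z1}) (map (collapse fill \<circ> piece_tok) ?ds))"
    by (rule col_alt_pair[OF _ z(4) z(3)]) simp
  also have "\<dots> = col_alt col_of fill ?V (?w Z13 Z12) - col_alt col_of fill ?V (?w Z12 Z13)"
  proof -
    have "?V \<union> {?z0, ?z1} - {?z0, ?z1} = ?V" using z(1,2) by blast
    then show ?thesis unfolding collapsed map_append keep using z(3) by (simp add: z(5) z(6)[simplified])
  qed
  also have "\<dots> = wrap I23 E11 \<alpha>2 Z13 * prod_list (E @ Z12 # R) - wrap I23 E11 \<alpha>2 Z12 * prod_list (E @ Z13 # R)"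
    using col_alt_wrap[OF split_pairs, of "[]" "[Z13]" "E @ Z12 # R"]
      col_alt_wrap[OF split_pairs, of "[]" "[Z12]" "E @ Z13 # R"]
    by (simp add: split_pairs_def)
  finally show ?thesis .
qed

lemma row_on_tail_w1_zero:
  "row_on (prod_list (map column_value tail_w1_zero) :: 'a::{idom, ring_char_0} m3)
     1 (if even (\<gamma>1 + \<gamma>2) then 1 else 2)"
proof -
  have "row_on (prod_list (map (column_alt 2) [1..<w2] :: 'a m3 list)) 1 1"
    using column_alt_fixes(2)[where 'a = 'a] by (intro row_on_prod_list) auto
  moreover have "row_on (prod_list (map (column_alt 1) [\<gamma>3..<\<gamma>1 + \<gamma>2 + \<gamma>3] :: 'a m3 list))
      1 (if even (\<gamma>1 + \<gamma>2) then 1 else 2)"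
  proof -
    have "\<forall>A\<in>set (map (column_alt 1) [\<gamma>3..<\<gamma>1 + \<gamma>2 + \<gamma>3] :: 'a m3 list). row_on A 1 2 \<and> row_on A 2 1"
      using column_alt_swaps[where 'a = 'a] by auto
    from row_on_prod_list_swap[OF this, of 1] show ?thesis
      by (cases "even (\<gamma>1 + \<gamma>2)") (simp_all add: numeral_3_eq_3 numeral_2_eq_2)
  qed
  moreover have "row_on (prod_list (map (column_alt 1) [0..<\<gamma>3] :: 'a m3 list))
      (if even (\<gamma>1 + \<gamma>2) then 1 else 2) (if even (\<gamma>1 + \<gamma>2) then 1 else 2)"
    using column_alt_fixes(1)[where 'a = 'a] by (intro row_on_prod_list) auto
  ultimately show ?thesis by (simp add: tail_w1_zero_def row_on_mult)
qed

lemma mult_star_shape_neq_0_cases: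
  assumes "w1 + w2 \<noteq> 0" and "ndetours \<le> \<gamma>1 + \<gamma>2"
  shows "mult_star shape TYPE('a::field_char_0) \<noteq> 0"
proof (cases "w1 = 0")
  case True
  then have w2: "1 \<le> w2" using assms(1) by simp
  let ?E = "map (column_alt 0) [\<alpha>2..<\<alpha>1 + \<alpha>2] :: 'a m3 list" and ?R = "map column_value tail_w1_zero :: 'a m3 list"
  have "row_on (prod_list ?E) 0 0"
    using column_alt_fixes(3)[where 'a = 'a] by (intro row_on_prod_list) auto
  then have "row_on (prod_list ?E * (Z12 * prod_list ?R)) 0 (if even (\<gamma>1 + \<gamma>2) then 1 else 2)"
    by (rule row_on_mult[OF _ row_on_mult[OF row_on_Z12_Z13(1) row_on_tail_w1_zero]])
  then have "row_on (prod_list (?E @ Z12 # ?R)) 0 (if even (\<gamma>1 + \<gamma>2) then 1 else 2)"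
    by simp
  then have "row_on (wrap I23 E11 \<alpha>2 Z13 * prod_list (?E @ Z12 # ?R) - wrap I23 E11 \<alpha>2 Z12 * prod_list (?E @ Z13 # ?R))
      1 (if even (\<gamma>1 + \<gamma>2) then 1 else 2)"
    using row_on_Z12_Z13[where 'a = 'a] by (intro row_on_diff row_on_wrap zero_row_wrap) simp_all
  then show ?thesis
    using mult_star_shape_neq_0 word_pieces_w1_zero[OF True w2] col_alt_pieces_w1_zero[OF True w2] by metis
next
  case False
  then have w1: "1 \<le> w1" by simp
  have "row_on (wrap I23 E11 \<alpha>2 (prod_list (map column_value middle_w1_pos))
      * prod_list (map column_value tail_w1_pos) :: 'a m3)
      (if even (\<gamma>1 + \<gamma>2 - ndetours) then 2 else 1) (if odd (w1 - 1) then 1 else 0)"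
    using row_on_middle_w1_pos[OF w1] row_on_tail_w1_pos[OF w1 assms(2)] by (intro row_on_wrap) simp_all
  then show ?thesis
    using mult_star_shape_neq_0 word_pieces_w1_pos[OF w1 assms(2)] col_alt_pieces_w1_pos[OF w1 assms(2)] by metis
qed

end

lemma ceiling_half: "\<lceil>real n / 2\<rceil> = int ((n + 1) div 2)"
proof (cases "even n")
  case True
  then show ?thesis by (auto elim!: evenE)
next
  case False
  then obtain k where "n = 2 * k + 1" using oddE by blast
  then show ?thesis by (simp add: ceiling_unique)
qed

theorem proposition5p8:
  fixes \<alpha>1 \<alpha>2 \<gamma>1 \<gamma>2 \<gamma>3 w1 w2 :: nat
  assumes "[\<gamma>1 + \<gamma>2 + \<gamma>3, \<gamma>2 + \<gamma>3, \<gamma>3] \<noteq> [0, 0, 0]"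
      and "[w1 + w2, w2] \<noteq> [0, 0]"
      and "w1 \<le> 2 \<or> (3 \<le> w1 \<and> \<lceil>real w1 / 2\<rceil> - 1 \<le> int (\<gamma>1 + \<gamma>2))"
  shows "mult_star [[\<alpha>1 + \<alpha>2, \<alpha>2], [\<gamma>1 + \<gamma>2 + \<gamma>3, \<gamma>2 + \<gamma>3, \<gamma>3], [w1 + w2, w2], []]
           TYPE('a::field_char_0) \<noteq> 0"
proof -
  have "(w1 - 1) div 2 \<le> \<gamma>1 + \<gamma>2"
    using assms(3) unfolding ceiling_half by linarith
  moreover have "w1 + w2 \<noteq> 0" using assms(2) by auto
  ultimately show ?thesis
    using mult_star_shape_neq_0_cases[of w1 w2 \<gamma>1 \<gamma>2 \<alpha>1 \<alpha>2 \<gamma>3, where 'a = 'a]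
    unfolding shape_def ndetours_def by blast
qed

end
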